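(* Let $E$ be a subfield of $\mathbb{C}$ and let $F(x_1,\ldots,x_m)\in E[[x_1,\ldots,x_m]]$ be D-finite. Suppose there exist positive constants $C_1,C_2$ such that for all $(\alpha_1,\ldots,\alpha_m)\in\mathbb{T}^m$ and all $n\ge 1$, the coefficient of $t^n$ in $F(\alpha_1 t,\ldots,\alpha_m t)$ has modulus at most $C_1 n^{C_2}$. Then there exists a nonzero polynomial $W(x_1,\ldots,x_m,t)\in E[x_1,\ldots,x_m,t]$ such that whenever $(\alpha_1,\ldots,\alpha_m)\in\mathbb{T}^m$ is such that $F(\alpha_1 t,\ldots,\alpha_m t)$ is a rational function, the series $W(\alpha_1,\ldots,\alpha_m,t)F(\alpha_1 t,\ldots,\alpha_m t)$ has radius of convergence strictly greater than $1$.
   Context: $\mathbb{T}$ denotes the unit circle in $\mathbb{C}$. D-finite means all partial derivatives of $F$ span a finite-dimensional vector space over $E(x_1,\ldots,x_m)$. *)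

theory Defs
  imports "HOL-Analysis.Analysis" "HOL-Computational_Algebra.Polynomial"
    "HOL-Computational_Algebra.Formal_Power_Series"
begin

definition subfield_C :: "complex set \<Rightarrow> bool" where
  "subfield_C E \<longleftrightarrow> 0 \<in> E \<and> 1 \<in> E \<and>
     (\<forall>x\<in>E. \<forall>y\<in>E. x + y \<in> E \<and> x * y \<in> E) \<and>
     (\<forall>x\<in>E. - x \<in> E \<and> inverse x \<in> E)"

text \<open>Multi-indices in m variables x_0,...,x_(m-1): exponent vectors supported in {..<m}.
  A multivariate formal power series is a coefficient function on multi-indices
  (only values on mons m matter).\<close>
definition mons :: "nat \<Rightarrow> (nat \<Rightarrow> nat) set" where
  "mons m = {a. \<forall>i\<ge>m. a i = 0}"

definition mseries_over :: "nat \<Rightarrow> complex set \<Rightarrow> ((nat \<Rightarrow> nat) \<Rightarrow> complex) \<Rightarrow> bool" where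
  "mseries_over m E F \<longleftrightarrow> (\<forall>a\<in>mons m. F a \<in> E)"

definition mpoly_over :: "nat \<Rightarrow> complex set \<Rightarrow> ((nat \<Rightarrow> nat) \<Rightarrow> complex) \<Rightarrow> bool" where
  "mpoly_over m E P \<longleftrightarrow> (\<forall>a\<in>mons m. P a \<in> E) \<and> finite {a\<in>mons m. P a \<noteq> 0}"

definition ms_mult :: "nat \<Rightarrow> ((nat \<Rightarrow> nat) \<Rightarrow> complex) \<Rightarrow> ((nat \<Rightarrow> nat) \<Rightarrow> complex)
    \<Rightarrow> (nat \<Rightarrow> nat) \<Rightarrow> complex" where
  "ms_mult m f g = (\<lambda>a. \<Sum>b\<in>{b\<in>mons m. \<forall>i. b i \<le> a i}. f b * g (\<lambda>i. a i - b i))"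

text \<open>Iterated partial derivative d^beta F, beta a multi-index:
  coefficient of x^a is  prod_i (a_i+1)...(a_i+beta_i) * F(a+beta).\<close>
definition ms_deriv :: "nat \<Rightarrow> (nat \<Rightarrow> nat) \<Rightarrow> ((nat \<Rightarrow> nat) \<Rightarrow> complex)
    \<Rightarrow> (nat \<Rightarrow> nat) \<Rightarrow> complex" where
  "ms_deriv m \<beta> F = (\<lambda>a. (\<Prod>i<m. pochhammer (of_nat (a i + 1)) (\<beta> i)) * F (\<lambda>i. a i + \<beta> i))"

text \<open>D-finiteness over E: the E(x_1..x_m)-span of all partial derivatives of F is
  finite-dimensional, i.e. there is a finite set B of derivatives such that every derivative
  lies in the E(x)-span of B (denominators cleared by a nonzero polynomial q).\<close>
definition dfinite :: "nat \<Rightarrow> complex set \<Rightarrow> ((nat \<Rightarrow> nat) \<Rightarrow> complex) \<Rightarrow> bool" where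
  "dfinite m E F \<longleftrightarrow> (\<exists>B. finite B \<and> B \<subseteq> mons m \<and>
     (\<forall>\<beta>\<in>mons m. \<exists>q p. mpoly_over m E q \<and> (\<exists>a\<in>mons m. q a \<noteq> 0) \<and>
        (\<forall>\<gamma>\<in>B. mpoly_over m E (p \<gamma>)) \<and>
        (\<forall>a\<in>mons m. ms_mult m q (ms_deriv m \<beta> F) a =
                       (\<Sum>\<gamma>\<in>B. ms_mult m (p \<gamma>) (ms_deriv m \<gamma> F) a))))"

definition diag_coeff :: "nat \<Rightarrow> ((nat \<Rightarrow> nat) \<Rightarrow> complex) \<Rightarrow> (nat \<Rightarrow> complex) \<Rightarrow> nat \<Rightarrow> complex" where
  "diag_coeff m F \<alpha> n = (\<Sum>a\<in>{a\<in>mons m. (\<Sum>i<m. a i) = n}. F a * (\<Prod>i<m. \<alpha> i ^ a i))"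

definition diag_fps :: "nat \<Rightarrow> ((nat \<Rightarrow> nat) \<Rightarrow> complex) \<Rightarrow> (nat \<Rightarrow> complex) \<Rightarrow> complex fps" where
  "diag_fps m F \<alpha> = Abs_fps (diag_coeff m F \<alpha>)"

text \<open>For a polynomial W in m+1 variables (variable index m playing the role of t),
  the univariate polynomial W(alpha_1,...,alpha_m,t) as a power series in t.\<close>
definition spec_fps :: "nat \<Rightarrow> ((nat \<Rightarrow> nat) \<Rightarrow> complex) \<Rightarrow> (nat \<Rightarrow> complex) \<Rightarrow> complex fps" where
  "spec_fps m W \<alpha> = Abs_fps (\<lambda>k. \<Sum>a\<in>{a\<in>mons (Suc m). W a \<noteq> 0 \<and> a m = k}.
                                  W a * (\<Prod>i<m. \<alpha> i ^ a i))"

definition is_rational_fps :: "complex fps \<Rightarrow> bool" where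
  "is_rational_fps g \<longleftrightarrow> (\<exists>p q :: complex poly. q \<noteq> 0 \<and> fps_of_poly q * g = fps_of_poly p)"

definition on_torus :: "nat \<Rightarrow> (nat \<Rightarrow> complex) \<Rightarrow> bool" where
  "on_torus m \<alpha> \<longleftrightarrow> (\<forall>i<m. norm (\<alpha> i) = 1)"

end

theory Submission
  imports Defs "HOL-Complex_Analysis.Complex_Analysis" "HOL-Computational_Algebra.Polynomial_FPS"
    "HOL-Computational_Algebra.Polynomial_Factorial" "HOL-Computational_Algebra.Field_as_Ring"
begin

text \<open>
  The derivatives of a D-finite series span a finite-dimensional space over \<open>E(x)\<close>, hence so do the
  powers \<open>\<theta>\<^sup>k F\<close> of the Euler operator \<open>\<theta> = x\<^sub>1\<partial>\<^sub>1 + \<dots> + x\<^sub>m\<partial>\<^sub>m\<close>, each being a combination of the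
  \<open>x\<^sup>\<beta> \<partial>\<^sup>\<beta> F\<close>. This yields \<open>\<Sum>\<^sub>k\<^sub>\<le>\<^sub>r c\<^sub>k(x) \<theta>\<^sup>k F = 0\<close> with polynomials \<open>c\<^sub>k\<close> and \<open>c\<^sub>r \<noteq> 0\<close>.
  Along the line \<open>x = \<alpha> t\<close> the operator \<open>\<theta>\<close> becomes \<open>t d/dt\<close>, so \<open>g(t) = F(\<alpha> t)\<close> satisfies
  \<open>\<Sum>\<^sub>k c\<^sub>k(\<alpha> t) (t d/dt)\<^sup>k g = 0\<close>. If \<open>g\<close> is rational, the polynomial growth of its coefficients
  keeps its poles out of the open unit disc and bounds their order on the unit circle by
  \<open>K + 1 = \<lceil>C\<^sub>2\<rceil> + 1\<close>, while the differential equation forces every nonzero pole to be a root of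
  \<open>c\<^sub>r(\<alpha> t)\<close>. Hence \<open>W(x, t) = c\<^sub>r(x t)\<^sup>K\<^sup>+\<^sup>1\<close> cancels all poles of \<open>g\<close> in the closed unit disc.
\<close>

section \<open>Rational power series annihilated by an Euler operator\<close>

definition fps_euler :: "complex fps \<Rightarrow> complex fps" where
  "fps_euler h = fps_X * fps_deriv h"

lemma fps_euler_rational_step:
  fixes q H :: "complex poly" and T :: "complex fps"
  assumes "fps_of_poly q ^ Suc k * T = fps_of_poly H"
  shows "fps_of_poly q ^ Suc (Suc k) * fps_euler T =
     fps_of_poly ([:0,1:] * (q * pderiv H - smult (of_nat (Suc k)) (pderiv q * H)))"
proof -
  let ?Q = "fps_of_poly q"
  have "fps_deriv (fps_of_poly (q ^ Suc k) * T) = fps_deriv (fps_of_poly H)"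
    using assms by (simp only: fps_of_poly_power)
  hence d: "fps_of_poly (pderiv (q ^ Suc k)) * T + ?Q ^ Suc k * fps_deriv T = fps_of_poly (pderiv H)"
    unfolding fps_of_poly_pderiv fps_of_poly_power by (metis add.commute fps_deriv_mult)
  have "?Q ^ Suc (Suc k) * fps_euler T = fps_X * ?Q * (?Q ^ Suc k * fps_deriv T)"
    by (simp add: fps_euler_def algebra_simps)
  also have "?Q ^ Suc k * fps_deriv T = fps_of_poly (pderiv H) - fps_of_poly (pderiv (q ^ Suc k)) * T"
    using d by (simp add: algebra_simps)
  also have "fps_of_poly (pderiv (q ^ Suc k)) = fps_const (of_nat (Suc k)) * fps_of_poly (pderiv q) * ?Q ^ k"
    by (simp only: pderiv_power_Suc fps_of_poly_mult fps_of_poly_smult fps_of_poly_power)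
       (simp add: algebra_simps)
  also have "fps_X * ?Q * (fps_of_poly (pderiv H) - fps_const (of_nat (Suc k)) * fps_of_poly (pderiv q) * ?Q ^ k * T)
     = fps_X * (?Q * fps_of_poly (pderiv H) - fps_const (of_nat (Suc k)) * fps_of_poly (pderiv q) * (?Q ^ Suc k * T))"
    by (simp add: algebra_simps)
  also have "\<dots> = fps_of_poly ([:0,1:] * (q * pderiv H - smult (of_nat (Suc k)) (pderiv q * H)))"
    unfolding assms by (simp add: fps_of_poly_mult fps_of_poly_diff fps_of_poly_smult algebra_simps)
  finally show ?thesis .
qed

lemma pderiv_linear_power_Suc_mult:
  fixes w v :: "complex poly"
  assumes "pderiv w = 1"
  shows "pderiv (w ^ Suc n * v) = w ^ n * (smult (of_nat (Suc n)) v + w * pderiv v)"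
proof -
  have "pderiv (w ^ Suc n * v) = smult (of_nat (Suc n)) (w ^ n) * v + w ^ Suc n * pderiv v"
    by (simp only: pderiv_mult pderiv_power_Suc assms mult_1_right) (simp add: algebra_simps)
  then show ?thesis by (simp add: algebra_simps)
qed

lemma linear_times_pderiv_power_mult:
  fixes w v :: "complex poly"
  assumes "pderiv w = 1"
  shows "w * pderiv (w ^ n * v) = w ^ n * (smult (of_nat n) v + w * pderiv v)"
proof (cases n)
  case (Suc n')
  show ?thesis unfolding Suc pderiv_linear_power_Suc_mult[OF assms] by (simp add: algebra_simps)
qed simp

text \<open>If \<open>g\<close> has a pole of order \<open>t + 1\<close> at \<open>\<rho> \<noteq> 0\<close>, then \<open>fps_euler ^^ k\<close> applied to \<open>g\<close> has a pole
  of order \<open>t + 1 + k\<close> there; in cleared form, \<open>q ^ Suc k\<close> leaves exactly \<open>t * k\<close> factors.\<close>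
lemma fps_euler_iterate_pole:
  fixes q p u :: "complex poly" and g :: "complex fps"
  assumes q: "q = [:-\<rho>,1:] ^ Suc t * u" and qg: "fps_of_poly q * g = fps_of_poly p"
    and u: "poly u \<rho> \<noteq> 0" and p: "poly p \<rho> \<noteq> 0" and \<rho>: "\<rho> \<noteq> 0"
  shows "\<exists>v. fps_of_poly q ^ Suc k * (fps_euler ^^ k) g = fps_of_poly ([:-\<rho>,1:] ^ (t * k) * v)
             \<and> poly v \<rho> \<noteq> 0"
proof (induction k)
  case 0
  show ?case using qg p by (intro exI[of _ p]) simp
next
  case (Suc k)
  define w where "w = [:-\<rho>,1:]"
  have w: "pderiv w = 1" "poly w \<rho> = 0" by (simp_all add: w_def pderiv_pCons)
  obtain v where v: "fps_of_poly q ^ Suc k * (fps_euler ^^ k) g = fps_of_poly (w ^ (t * k) * v)"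
    and v0: "poly v \<rho> \<noteq> 0" using Suc.IH unfolding w_def by blast
  define v' where "v' = [:0,1:] * (smult (of_nat (t * k)) v * u + w * pderiv v * u
          - smult (of_nat (Suc k)) (smult (of_nat (Suc t)) v * u + w * v * pderiv u))"
  have "q * pderiv (w ^ (t * k) * v) - smult (of_nat (Suc k)) (pderiv q * (w ^ (t * k) * v))
      = w ^ t * u * (w * pderiv (w ^ (t * k) * v))
        - smult (of_nat (Suc k)) (pderiv (w ^ Suc t * u) * (w ^ (t * k) * v))"
    by (simp add: q w_def algebra_simps)
  also have "\<dots> = w ^ (t * Suc k) * (smult (of_nat (t * k)) v * u + w * pderiv v * u
          - smult (of_nat (Suc k)) (smult (of_nat (Suc t)) v * u + w * v * pderiv u))"
    unfolding linear_times_pderiv_power_mult[OF w(1)] pderiv_linear_power_Suc_mult[OF w(1)]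
    by (simp add: algebra_simps power_add)
  finally have "fps_of_poly q ^ Suc (Suc k) * (fps_euler ^^ Suc k) g = fps_of_poly (w ^ (t * Suc k) * v')"
    using fps_euler_rational_step[OF v] by (simp add: v'_def algebra_simps)
  moreover have "poly v' \<rho> = \<rho> * poly v \<rho> * poly u \<rho> * (of_nat (t * k) - of_nat (Suc k) * of_nat (Suc t))"
    unfolding v'_def by (simp add: w algebra_simps)
  moreover have "(of_nat (t * k) :: complex) \<noteq> of_nat (Suc k) * of_nat (Suc t)"
  proof -
    have "t * k < Suc k * Suc t" by simp
    thus ?thesis by (metis of_nat_eq_iff of_nat_mult less_irrefl)
  qed
  ultimately show ?case using \<rho> v0 u unfolding w_def by (intro exI[of _ v']) simp
qed

lemma power_Suc_mult_clearing:
  fixes w u :: "'a::comm_semiring_1"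
  assumes "k \<le> r"
  shows "(w ^ Suc t * u) ^ (r - k) * w ^ (t * k) = w ^ (t * r) * (w ^ (r - k) * u ^ (r - k))"
proof -
  have "t * r = t * k + t * (r - k)" using assms by (metis add_mult_distrib2 le_add_diff_inverse)
  hence e: "Suc t * (r - k) + t * k = t * r + (r - k)" by simp
  have "(w ^ Suc t * u) ^ (r - k) * w ^ (t * k) = w ^ (Suc t * (r - k) + t * k) * u ^ (r - k)"
    by (simp only: power_mult_distrib power_add power_mult mult_ac)
  also have "\<dots> = w ^ (t * r) * (w ^ (r - k) * u ^ (r - k))"
    unfolding e by (simp add: power_add mult_ac)
  finally show ?thesis .
qed

lemma euler_ode_pole_root:
  fixes q p :: "complex poly" and g :: "complex fps" and Q :: "nat \<Rightarrow> complex poly"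
  assumes qg: "fps_of_poly q * g = fps_of_poly p" and q0: "q \<noteq> 0" and root: "poly q \<rho> = 0"
    and p: "poly p \<rho> \<noteq> 0" and \<rho>: "\<rho> \<noteq> 0"
    and ode: "(\<Sum>k\<le>r. fps_of_poly (Q k) * (fps_euler ^^ k) g) = 0"
  shows "poly (Q r) \<rho> = 0"
proof -
  define w where "w = [:-\<rho>,1:]"
  obtain u where qu: "q = w ^ order \<rho> q * u" and "\<not> w dvd u"
    using order_decomp[OF q0, of \<rho>] unfolding w_def by blast
  from \<open>\<not> w dvd u\<close> have u: "poly u \<rho> \<noteq> 0" by (simp add: w_def poly_eq_0_iff_dvd)
  have "order \<rho> q \<noteq> 0" using root q0 order_root by blast
  then obtain t where t: "order \<rho> q = Suc t" using not0_implies_Suc by blast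
  have q: "q = w ^ Suc t * u" using qu unfolding t .
  obtain v where v: "\<And>k. fps_of_poly q ^ Suc k * (fps_euler ^^ k) g = fps_of_poly (w ^ (t * k) * v k)"
    and v0: "\<And>k. poly (v k) \<rho> \<noteq> 0"
    using fps_euler_iterate_pole[OF q[unfolded w_def] qg u p \<rho>] unfolding w_def by metis
  have cleared: "Q k * q ^ (r - k) * (w ^ (t * k) * v k)
      = w ^ (t * r) * (Q k * w ^ (r - k) * u ^ (r - k) * v k)" if "k \<le> r" for k
    using power_Suc_mult_clearing[OF that, of w t u] unfolding q[symmetric]
    by (metis (no_types, lifting) mult.assoc mult.left_commute)
  have "0 = fps_of_poly q ^ Suc r * (\<Sum>k\<le>r. fps_of_poly (Q k) * (fps_euler ^^ k) g)"
    using ode by simp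
  also have "\<dots> = (\<Sum>k\<le>r. fps_of_poly (Q k * q ^ (r - k)) * (fps_of_poly q ^ Suc k * (fps_euler ^^ k) g))"
    unfolding sum_distrib_left
  proof (rule sum.cong[OF refl])
    fix k assume "k \<in> {..r}"
    hence "fps_of_poly q ^ Suc r = fps_of_poly q ^ (r - k) * fps_of_poly q ^ Suc k"
      by (simp flip: power_add)
    thus "fps_of_poly q ^ Suc r * (fps_of_poly (Q k) * (fps_euler ^^ k) g) =
        fps_of_poly (Q k * q ^ (r - k)) * (fps_of_poly q ^ Suc k * (fps_euler ^^ k) g)"
      by (simp only: fps_of_poly_mult fps_of_poly_power mult_ac)
  qed
  also have "\<dots> = fps_of_poly (w ^ (t * r) * (\<Sum>k\<le>r. Q k * w ^ (r - k) * u ^ (r - k) * v k))"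
    unfolding v fps_of_poly_mult[symmetric] fps_of_poly_sum[symmetric] sum_distrib_left
    by (intro arg_cong[where f = fps_of_poly] sum.cong refl) (simp add: cleared)
  finally have "(\<Sum>k\<le>r. Q k * w ^ (r - k) * u ^ (r - k) * v k) = 0"
    by (simp add: w_def)
  hence "poly (\<Sum>k\<le>r. Q k * w ^ (r - k) * u ^ (r - k) * v k) \<rho> = 0" by simp
  moreover have "poly (\<Sum>k\<le>r. Q k * w ^ (r - k) * u ^ (r - k) * v k) \<rho>
      = (\<Sum>k\<le>r. if k = r then poly (Q r) \<rho> * poly (v r) \<rho> else 0)"
    unfolding poly_sum by (rule sum.cong) (auto simp: w_def)
  ultimately show ?thesis using v0[of r] by simp
qed

lemma negative_binomial_sums:
  fixes r :: real
  assumes "0 \<le> r" "r < 1"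
  shows "(\<lambda>n. real ((n + k) choose k) * r ^ n) sums (1 / (1 - r) ^ Suc k)"
proof -
  have "\<bar>-r\<bar> < 1" using assms by simp
  from gen_binomial_real[OF this, of "- real (Suc k)"]
  have s: "(\<lambda>n. ((- real (Suc k)) gchoose n) * (- r) ^ n) sums (1 + - r) powr (- real (Suc k))" .
  have "((- real (Suc k)) gchoose n) * (- r) ^ n = real ((n + k) choose k) * r ^ n" for n
  proof -
    have "((- real (Suc k)) gchoose n) = (-1) ^ n * ((real (k + n)) gchoose n)"
      by (subst gbinomial_minus) (simp add: algebra_simps)
    also have "(real (k + n) gchoose n) = real ((k + n) choose n)"
      by (simp add: binomial_gbinomial)
    also have "(k + n) choose n = (n + k) choose k"
      by (metis add.commute binomial_symmetric le_add2 add_diff_cancel_right')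
    finally have "((- real (Suc k)) gchoose n) = (-1) ^ n * real ((n + k) choose k)" .
    moreover have "(-1) ^ n * (- r) ^ n = r ^ n"
      by (simp flip: power_mult_distrib)
    ultimately show ?thesis by (metis mult.commute mult.left_commute)
  qed
  moreover have "(1 + - r) powr (- real (Suc k)) = 1 / (1 - r) ^ Suc k"
    using assms by (simp only: powr_minus powr_realpow divide_inverse) simp
  ultimately show ?thesis using s by simp
qed

lemma power_le_fact_times_binomial: "n ^ k \<le> fact k * ((n + k) choose k)"
proof (induction k)
  case (Suc k)
  have "n ^ Suc k \<le> Suc (n + k) * (fact k * ((n + k) choose k))"
    unfolding power_Suc using Suc by (intro mult_mono) auto
  also have "\<dots> = fact (Suc k) * ((n + Suc k) choose Suc k)"
    using Suc_times_binomial_eq[of "n + k" k] by (simp add: algebra_simps)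
  finally show ?case .
qed simp

lemma powr_le_fact_times_binomial:
  assumes "n \<ge> 1" "c \<le> real k"
  shows "real n powr c \<le> fact k * real ((n + k) choose k)"
proof -
  have "real n powr c \<le> real n powr real k"
    using assms by (intro powr_mono) auto
  also have "\<dots> = real (n ^ k)" using assms by (simp add: powr_realpow)
  also have "\<dots> \<le> real (fact k * ((n + k) choose k))"
    by (subst of_nat_le_iff) (rule power_le_fact_times_binomial)
  finally show ?thesis by simp
qed

lemma polynomial_growth_eval_fps_bound:
  fixes g :: "complex fps" and z :: complex
  assumes bd: "\<forall>n\<ge>1. norm (g $ n) \<le> C * real n powr c" and C: "C \<ge> 0" and k: "c \<le> real k"
    and z: "norm z < 1"
  shows "summable (\<lambda>n. g $ n * z ^ n)"
    and "norm (eval_fps g z) \<le> (norm (g $ 0) + C * fact k) / (1 - norm z) ^ Suc k"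
proof -
  define r where "r = norm z"
  have r: "0 \<le> r" "r < 1" using z by (auto simp: r_def)
  define M where "M n = (if n = 0 then norm (g $ 0) else 0) + C * fact k * (real ((n + k) choose k) * r ^ n)" for n
  have "(\<lambda>n. if n = 0 then norm (g $ 0) else 0) sums norm (g $ 0)"
    using sums_single[of 0 "\<lambda>_. norm (g $ 0)"] by (simp add: if_distrib cong: if_cong)
  hence M: "M sums (norm (g $ 0) + C * fact k * (1 / (1 - r) ^ Suc k))"
    unfolding M_def by (intro sums_add sums_mult negative_binomial_sums[OF r])
  have le: "norm (g $ n * z ^ n) \<le> M n" for n
  proof (cases "n = 0")
    case False
    have "norm (g $ n) \<le> C * (fact k * real ((n + k) choose k))"
      using bd False k C by (intro order.trans[OF _ mult_left_mono[OF powr_le_fact_times_binomial]]) auto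
    hence "norm (g $ n) * r ^ n \<le> C * (fact k * real ((n + k) choose k)) * r ^ n"
      using r by (intro mult_right_mono) auto
    thus ?thesis using False by (simp add: M_def norm_mult norm_power r_def algebra_simps)
  qed (use C in \<open>simp add: M_def\<close>)
  have sn: "summable (\<lambda>n. norm (g $ n * z ^ n))"
    by (rule summable_comparison_test[OF _ sums_summable[OF M]]) (use le in auto)
  then show "summable (\<lambda>n. g $ n * z ^ n)" by (rule summable_norm_cancel)
  have "norm (eval_fps g z) \<le> (\<Sum>n. norm (g $ n * z ^ n))"
    unfolding eval_fps_def by (rule summable_norm[OF sn])
  also have "\<dots> \<le> norm (g $ 0) + C * fact k * (1 / (1 - r) ^ Suc k)"
    using suminf_le[OF le sn sums_summable[OF M]] sums_unique[OF M] by simp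
  also have "\<dots> \<le> (norm (g $ 0) + C * fact k) / (1 - r) ^ Suc k"
  proof -
    have "0 < (1 - r) ^ Suc k" "(1 - r) ^ Suc k \<le> 1" using r by (simp, intro power_le_one) auto
    hence "norm (g $ 0) \<le> norm (g $ 0) / (1 - r) ^ Suc k"
      by (simp add: le_divide_eq mult_left_le)
    thus ?thesis by (simp add: add_divide_distrib)
  qed
  finally show "norm (eval_fps g z) \<le> (norm (g $ 0) + C * fact k) / (1 - norm z) ^ Suc k"
    by (simp add: r_def)
qed

lemma polynomial_growth_fps_conv_radius:
  fixes g :: "complex fps"
  assumes bd: "\<forall>n\<ge>1. norm (g $ n) \<le> C * real n powr c" and C: "C \<ge> 0"
  shows "fps_conv_radius g \<ge> 1"
  unfolding fps_conv_radius_def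
proof (rule conv_radius_geI_ex)
  fix r :: real assume r: "0 < r" "ereal r < 1"
  have "c \<le> real (nat \<lceil>c\<rceil>)" by linarith
  from polynomial_growth_eval_fps_bound(1)[OF bd C this, of "of_real r"] r
  show "\<exists>z. norm z = r \<and> summable (\<lambda>n. g $ n * z ^ n)"
    by (intro exI[of _ "of_real r"]) auto
qed

lemma rational_fps_eval:
  fixes g :: "complex fps"
  assumes qg: "fps_of_poly q * g = fps_of_poly p" and R: "fps_conv_radius g \<ge> 1" and z: "norm z < 1"
  shows "poly q z * eval_fps g z = poly p z"
proof -
  have "ereal (norm z) < 1" using z by simp
  hence "norm z < fps_conv_radius g" using R by (meson less_le_trans)
  hence "eval_fps (fps_of_poly q * g) z = eval_fps (fps_of_poly q) z * eval_fps g z"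
    by (intro eval_fps_mult) auto
  thus ?thesis using qg by simp
qed

lemma rational_fps_pole_norm_ge:
  fixes g :: "complex fps"
  assumes qg: "fps_of_poly q * g = fps_of_poly p" and R: "fps_conv_radius g \<ge> 1"
    and cp: "coprime p q" and root: "poly q \<rho> = 0"
  shows "norm \<rho> \<ge> 1"
proof (rule ccontr)
  assume "\<not> norm \<rho> \<ge> 1"
  hence "poly q \<rho> * eval_fps g \<rho> = poly p \<rho>" by (intro rational_fps_eval[OF qg R]) simp
  with root have "poly p \<rho> = 0" by simp
  with coprime_poly_0[OF cp] root show False by simp
qed

lemma poly_eq_0_if_linear_bound_along_radius:
  fixes p u :: "complex poly"
  assumes le: "\<And>t. t \<in> {0<..<1} \<Longrightarrow> norm (poly p (of_real t * \<rho>)) \<le> A * (1 - t) * norm (poly u (of_real t * \<rho>))"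
  shows "poly p \<rho> = 0"
proof -
  have "eventually (\<lambda>t. t \<in> {0<..<1}) (at_left (1::real))"
    by (rule eventually_at_left_real) simp
  hence ev: "eventually (\<lambda>t. norm (poly p (of_real t * \<rho>)) \<le> A * (1 - t) * norm (poly u (of_real t * \<rho>)))
      (at_left (1::real))"
    by (rule eventually_mono) (rule le)
  have lim_p: "((\<lambda>t. norm (poly p (of_real t * \<rho>))) \<longlongrightarrow> norm (poly p (of_real 1 * \<rho>)))
      (at_left (1::real))"
    by (intro tendsto_intros)
  have lim_u: "((\<lambda>t. A * (1 - t) * norm (poly u (of_real t * \<rho>)))
      \<longlongrightarrow> A * (1 - 1) * norm (poly u (of_real 1 * \<rho>))) (at_left (1::real))"
    by (intro tendsto_intros)
  have "norm (poly p (of_real 1 * \<rho>)) \<le> A * (1 - 1) * norm (poly u (of_real 1 * \<rho>))"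
    by (rule tendsto_le[OF trivial_limit_at_left_real lim_u lim_p ev])
  thus ?thesis by simp
qed

text \<open>On the unit circle a pole of order \<open>s\<close> forces \<open>|g(t\<rho>)| \<ge> const \<cdot> (1 - t) ^ -s\<close>, which the
  growth bound only allows for \<open>s \<le> k + 1\<close>.\<close>
lemma polynomial_growth_pole_order_le:
  fixes g :: "complex fps"
  assumes bd: "\<forall>n\<ge>1. norm (g $ n) \<le> C * real n powr c" and C: "C \<ge> 0" and k: "c \<le> real k"
    and qg: "fps_of_poly q * g = fps_of_poly p" and cp: "coprime p q" and q0: "q \<noteq> 0"
    and \<rho>: "norm \<rho> = 1"
  shows "order \<rho> q \<le> Suc k"
proof (rule ccontr)
  assume "\<not> order \<rho> q \<le> Suc k"
  hence "Suc (Suc k) \<le> order \<rho> q" by simp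
  then obtain j where s: "order \<rho> q = Suc (Suc k) + j" using le_Suc_ex by blast
  obtain u where q: "q = [:-\<rho>,1:] ^ order \<rho> q * u"
    using order_decomp[OF q0, of \<rho>] by blast
  have "poly q \<rho> = 0" using s by (simp add: order_root)
  hence p: "poly p \<rho> \<noteq> 0" using coprime_poly_0[OF cp] by auto
  have R: "fps_conv_radius g \<ge> 1" by (rule polynomial_growth_fps_conv_radius[OF bd C])
  define A where "A = norm (g $ 0) + C * fact k"
  have "poly p \<rho> = 0"
  proof (rule poly_eq_0_if_linear_bound_along_radius)
    fix t :: real assume t: "t \<in> {0<..<1}"
    define z where "z = of_real t * \<rho>"
    have nz: "norm z = t" using t \<rho> by (simp add: z_def norm_mult)
    have "z - \<rho> = of_real (t - 1) * \<rho>" by (simp add: z_def algebra_simps)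
    hence nz\<rho>: "norm (z - \<rho>) = 1 - t" using t \<rho> by (simp only: norm_mult norm_of_real) simp
    have "poly p z = poly q z * eval_fps g z" using rational_fps_eval[OF qg R] nz t by simp
    also have "poly q z = (z - \<rho>) ^ (Suc (Suc k) + j) * poly u z"
    proof -
      have "poly [:-\<rho>,1:] z = z - \<rho>" by simp
      then show ?thesis using q s by (metis poly_mult poly_power)
    qed
    finally have "norm (poly p z) = (1 - t) ^ (Suc (Suc k) + j) * norm (poly u z) * norm (eval_fps g z)"
      by (simp add: norm_mult norm_power nz\<rho>)
    also have "\<dots> \<le> (1 - t) ^ (Suc (Suc k) + j) * norm (poly u z) * (A / (1 - t) ^ Suc k)"
      using polynomial_growth_eval_fps_bound(2)[OF bd C k, of z] nz t
      by (intro mult_left_mono) (auto simp: A_def)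
    also have "\<dots> = A * (1 - t) * ((1 - t) ^ j * norm (poly u z))"
      using t by (simp add: power_add field_simps)
    also have "\<dots> \<le> A * (1 - t) * norm (poly u z)"
      using t C by (intro mult_left_mono mult_left_le_one_le power_le_one) (auto simp: A_def)
    finally show "norm (poly p (of_real t * \<rho>)) \<le> A * (1 - t) * norm (poly u (of_real t * \<rho>))"
      by (simp add: z_def)
  qed
  with p show False by simp
qed

lemma rational_fps_coprime_representation:
  fixes q p :: "complex poly" and g :: "complex fps"
  assumes q0: "q \<noteq> 0" and qg: "fps_of_poly q * g = fps_of_poly p"
  shows "\<exists>p' q'. q' \<noteq> 0 \<and> coprime p' q' \<and> fps_of_poly q' * g = fps_of_poly p'"
proof (intro exI conjI)
  define d where "d = gcd p q"
  have d0: "d \<noteq> 0" using q0 by (simp add: d_def)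
  show "coprime (p div d) (q div d)" unfolding d_def using q0 by (intro div_gcd_coprime) simp
  show "q div d \<noteq> 0" using q0 by (simp add: d_def dvd_div_eq_0_iff)
  have "q = d * (q div d)" "p = d * (p div d)" by (simp_all add: d_def)
  hence "fps_of_poly d * (fps_of_poly (q div d) * g) = fps_of_poly d * fps_of_poly (p div d)"
    using qg by (metis fps_of_poly_mult mult.assoc)
  thus "fps_of_poly (q div d) * g = fps_of_poly (p div d)"
    using d0 by (simp add: fps_of_poly_eq_iff[of d 0, simplified])
qed

lemma poly_factor_dvd_and_zero_free:
  fixes q M :: "complex poly"
  assumes "q \<noteq> 0" "M \<noteq> 0" "\<forall>\<rho>\<in>S. poly q \<rho> = 0 \<longrightarrow> order \<rho> q \<le> order \<rho> M"
  shows "\<exists>d e. q = d * e \<and> d dvd M \<and> (\<forall>\<rho>\<in>S. poly e \<rho> \<noteq> 0)"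
  using assms
proof (induction "degree q" arbitrary: q M rule: less_induct)
  case (less q M)
  show ?case
  proof (cases "\<forall>\<rho>\<in>S. poly q \<rho> \<noteq> 0")
    case True
    thus ?thesis by (intro exI[of _ 1] exI[of _ q]) simp
  next
    case False
    then obtain \<rho> where \<rho>: "\<rho> \<in> S" "poly q \<rho> = 0" by blast
    define w where "w = [:-\<rho>,1:]"
    have "order \<rho> q \<noteq> 0" using less.prems(1) \<rho>(2) order_root by blast
    hence "order \<rho> M \<noteq> 0" using less.prems(3) \<rho> by fastforce
    hence "poly M \<rho> = 0" using order_root by blast
    then obtain M' where M': "M = w * M'" unfolding w_def by (metis dvdE poly_eq_0_iff_dvd)
    from \<rho> obtain q' where q': "q = w * q'" unfolding w_def by (metis dvdE poly_eq_0_iff_dvd)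
    have q'0: "q' \<noteq> 0" and M'0: "M' \<noteq> 0" using less.prems q' M' by auto
    have "degree q = degree w + degree q'" unfolding q' by (rule degree_mult_eq) (use q'0 in \<open>simp_all add: w_def\<close>)
    hence "degree q' < degree q" by (simp add: w_def)
    moreover have "\<forall>\<sigma>\<in>S. poly q' \<sigma> = 0 \<longrightarrow> order \<sigma> q' \<le> order \<sigma> M'"
    proof (intro ballI impI)
      fix \<sigma> assume "\<sigma> \<in> S" "poly q' \<sigma> = 0"
      hence "order \<sigma> q \<le> order \<sigma> M" using less.prems(3) q' by simp
      thus "order \<sigma> q' \<le> order \<sigma> M'"
        using less.prems(1,2) by (simp add: q' M' order_mult)
    qed
    ultimately obtain d e where "q' = d * e" "d dvd M'" "\<forall>\<rho>\<in>S. poly e \<rho> \<noteq> 0"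
      using less.hyps q'0 M'0 by blast
    thus ?thesis using q' M' by (intro exI[of _ "w * d"] exI[of _ e]) (simp add: mult.assoc)
  qed
qed

lemma poly_has_fps_expansion: "poly c has_fps_expansion fps_of_poly c"
proof -
  have "eval_fps (fps_of_poly c) has_fps_expansion fps_of_poly c"
    by (rule eval_fps_has_fps_expansion) simp
  thus ?thesis by (simp add: eval_fps_of_poly[abs_def])
qed

lemma rational_fps_conv_radius_gt_1:
  fixes a e :: "complex poly" and h :: "complex fps"
  assumes eh: "fps_of_poly e * h = fps_of_poly a" and e: "\<forall>\<rho>\<in>cball 0 1. poly e \<rho> \<noteq> 0"
  shows "conv_radius (fps_nth h) > 1"
proof -
  have "poly e 0 \<noteq> 0" using e by simp
  hence e0: "e \<noteq> 0" by auto
  define R where "R = Min (insert 2 (norm ` {\<rho>. poly e \<rho> = 0}))"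
  have fin: "finite {\<rho>. poly e \<rho> = 0}" using e0 poly_roots_finite by blast
  have R1: "R > 1" unfolding R_def using fin e by (subst Min_gr_iff) (auto simp: not_le)
  have Rle: "norm \<rho> \<ge> R" if "poly e \<rho> = 0" for \<rho>
    unfolding R_def using fin that by (intro Min_le) auto
  have e00: "fps_of_poly e $ 0 \<noteq> 0" using e by (simp add: poly_0_coeff_0[symmetric])
  have "h = inverse (fps_of_poly e) * (fps_of_poly e * h)"
    using inverse_mult_eq_1[OF e00] by (simp flip: mult.assoc)
  also have "\<dots> = fps_of_poly a / fps_of_poly e"
    unfolding eh fps_divide_unit[OF e00] by (simp add: mult.commute)
  finally have "h = fps_of_poly a / fps_of_poly e" .
  moreover have "(\<lambda>z. poly a z / poly e z) has_fps_expansion (fps_of_poly a / fps_of_poly e)"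
    using e00 by (intro has_fps_expansion_divide' poly_has_fps_expansion)
  moreover have "(\<lambda>z. poly a z / poly e z) holomorphic_on eball 0 (ereal R)"
    using Rle by (intro holomorphic_intros) force
  ultimately have "fps_conv_radius h \<ge> ereal R"
    using holomorphic_on_imp_fps_conv_radius_ge by blast
  moreover have "ereal R > 1" using R1 by simp
  ultimately show ?thesis unfolding fps_conv_radius_def by (meson less_le_trans)
qed

lemma euler_ode_rational_conv_radius_gt_1:
  fixes g :: "complex fps" and q p :: "complex poly" and Q :: "nat \<Rightarrow> complex poly"
  assumes bd: "\<forall>n\<ge>1. norm (g $ n) \<le> C * real n powr c" and C: "C \<ge> 0" and K: "c \<le> real K"
    and q0: "q \<noteq> 0" and qg: "fps_of_poly q * g = fps_of_poly p"
    and ode: "(\<Sum>k\<le>r. fps_of_poly (Q k) * (fps_euler ^^ k) g) = 0"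
  shows "conv_radius (fps_nth (fps_of_poly (Q r) ^ Suc K * g)) > 1"
proof (cases "Q r = 0")
  case True
  then show ?thesis by simp
next
  case False
  define M where "M = Q r ^ Suc K"
  have M0: "M \<noteq> 0" using False by (simp add: M_def)
  obtain p' q' where q'0: "q' \<noteq> 0" and cp: "coprime p' q'" and q'g: "fps_of_poly q' * g = fps_of_poly p'"
    using rational_fps_coprime_representation[OF q0 qg] by blast
  have R: "fps_conv_radius g \<ge> 1" by (rule polynomial_growth_fps_conv_radius[OF bd C])
  have "\<forall>\<rho>\<in>cball 0 1. poly q' \<rho> = 0 \<longrightarrow> order \<rho> q' \<le> order \<rho> M"
  proof (intro ballI impI)
    fix \<rho> :: complex assume \<rho>: "\<rho> \<in> cball 0 1" "poly q' \<rho> = 0"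
    have "norm \<rho> = 1" using rational_fps_pole_norm_ge[OF q'g R cp \<rho>(2)] \<rho>(1) by simp
    have order_le: "order \<rho> q' \<le> Suc K"
      by (rule polynomial_growth_pole_order_le[OF bd C K q'g cp q'0 \<open>norm \<rho> = 1\<close>])
    have "poly p' \<rho> \<noteq> 0" using coprime_poly_0[OF cp, of \<rho>] \<rho>(2) by simp
    moreover have "\<rho> \<noteq> 0" using \<open>norm \<rho> = 1\<close> by auto
    ultimately have "poly (Q r) \<rho> = 0" by (rule euler_ode_pole_root[OF q'g q'0 \<rho>(2) _ _ ode])
    hence "[:-\<rho>,1:] ^ Suc K dvd M" unfolding M_def by (intro dvd_power_same) (simp add: poly_eq_0_iff_dvd)
    hence "Suc K \<le> order \<rho> M" using M0 order_divides by blast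
    with order_le show "order \<rho> q' \<le> order \<rho> M" by simp
  qed
  then obtain d e where de: "q' = d * e" "d dvd M" and e: "\<forall>\<rho>\<in>cball 0 1. poly e \<rho> \<noteq> 0"
    using poly_factor_dvd_and_zero_free[OF q'0 M0] by blast
  obtain M' where M': "M = d * M'" using de(2) by blast
  have "fps_of_poly e * (fps_of_poly M * g) = fps_of_poly M' * (fps_of_poly q' * g)"
    unfolding M' de(1) by (simp add: fps_of_poly_mult algebra_simps)
  also have "\<dots> = fps_of_poly (M' * p')" by (simp add: q'g fps_of_poly_mult)
  finally have "conv_radius (fps_nth (fps_of_poly M * g)) > 1"
    using e by (rule rational_fps_conv_radius_gt_1)
  thus ?thesis unfolding M_def fps_of_poly_power .
qed

section \<open>Multivariate polynomials as coefficient functions\<close>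

lemma subfield_C_zero: "subfield_C E \<Longrightarrow> 0 \<in> E"
  and subfield_C_one: "subfield_C E \<Longrightarrow> 1 \<in> E"
  and subfield_C_add: "subfield_C E \<Longrightarrow> x \<in> E \<Longrightarrow> y \<in> E \<Longrightarrow> x + y \<in> E"
  and subfield_C_mult: "subfield_C E \<Longrightarrow> x \<in> E \<Longrightarrow> y \<in> E \<Longrightarrow> x * y \<in> E"
  and subfield_C_uminus: "subfield_C E \<Longrightarrow> x \<in> E \<Longrightarrow> - x \<in> E"
  by (simp_all add: subfield_C_def)

lemma subfield_C_sum: "subfield_C E \<Longrightarrow> (\<And>j. j \<in> J \<Longrightarrow> f j \<in> E) \<Longrightarrow> sum f J \<in> E"
  by (induction J rule: infinite_finite_induct) (auto simp: subfield_C_zero subfield_C_add)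

lemma subfield_C_of_nat: "subfield_C E \<Longrightarrow> of_nat n \<in> E"
  by (induction n) (auto simp: subfield_C_zero subfield_C_one subfield_C_add)

definition lower_mons :: "nat \<Rightarrow> (nat \<Rightarrow> nat) \<Rightarrow> (nat \<Rightarrow> nat) set" where
  "lower_mons m a = {b\<in>mons m. \<forall>i. b i \<le> a i}"

text \<open>\<^const>\<open>ms_mult\<close> may be nonzero outside \<^term>\<open>mons m\<close>; cutting it off there makes products of
  series equal as functions, so that the usual ring laws hold as equations.\<close>
definition mmult :: "nat \<Rightarrow> ((nat \<Rightarrow> nat) \<Rightarrow> complex) \<Rightarrow> ((nat \<Rightarrow> nat) \<Rightarrow> complex) \<Rightarrow> (nat \<Rightarrow> nat) \<Rightarrow> complex" where
  "mmult m P f = (\<lambda>a. if a \<in> mons m then ms_mult m P f a else 0)"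

definition mnonzero :: "nat \<Rightarrow> ((nat \<Rightarrow> nat) \<Rightarrow> complex) \<Rightarrow> bool" where
  "mnonzero m P \<longleftrightarrow> (\<exists>a\<in>mons m. P a \<noteq> 0)"

definition mmonom :: "(nat \<Rightarrow> nat) \<Rightarrow> (nat \<Rightarrow> nat) \<Rightarrow> complex" where
  "mmonom \<beta> = (\<lambda>a. if a = \<beta> then 1 else 0)"

abbreviation mone :: "(nat \<Rightarrow> nat) \<Rightarrow> complex" where
  "mone \<equiv> mmonom (\<lambda>_. 0)"

lemma mmult_apply: "a \<in> mons m \<Longrightarrow> mmult m P f a = (\<Sum>b\<in>lower_mons m a. P b * f (\<lambda>i. a i - b i))"
  by (simp add: mmult_def ms_mult_def lower_mons_def)

lemma mmult_outside: "a \<notin> mons m \<Longrightarrow> mmult m P f a = 0"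
  by (simp add: mmult_def)

lemma finite_bounded_mons: "finite {b :: nat \<Rightarrow> nat. (\<forall>i. b i \<le> a i) \<and> (\<forall>i\<ge>m. b i = 0)}"
proof -
  let ?S = "{b :: nat \<Rightarrow> nat. (\<forall>i. b i \<le> a i) \<and> (\<forall>i\<ge>m. b i = 0)}"
  have "inj_on (\<lambda>b. restrict b {..<m}) ?S"
  proof (rule inj_onI)
    fix b c assume b: "b \<in> ?S" and c: "c \<in> ?S" and e: "restrict b {..<m} = restrict c {..<m}"
    show "b = c"
    proof
      fix i show "b i = c i"
        using fun_cong[OF e, of i] b c by (cases "i < m") auto
    qed
  qed
  moreover have "(\<lambda>b. restrict b {..<m}) ` ?S \<subseteq> PiE {..<m} (\<lambda>i. {..a i})"
    unfolding image_subset_iff restrict_PiE_iff by auto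
  hence "finite ((\<lambda>b. restrict b {..<m}) ` ?S)" by (rule finite_subset) (intro finite_PiE; simp)
  ultimately show ?thesis using finite_imageD by blast
qed

lemma finite_lower_mons [simp, intro]: "finite (lower_mons m a)"
  by (rule finite_subset[OF _ finite_bounded_mons[of a m]]) (auto simp: lower_mons_def mons_def)

lemma lower_mons_diff: "b \<in> lower_mons m a \<Longrightarrow> a \<in> mons m \<Longrightarrow> (\<lambda>i. a i - b i) \<in> lower_mons m a"
  by (simp add: lower_mons_def mons_def)

lemma lower_mons_mons: "b \<in> lower_mons m a \<Longrightarrow> b \<in> mons m"
  by (simp add: lower_mons_def)

lemma mons_diff [simp]: "a \<in> mons m \<Longrightarrow> (\<lambda>i. a i - b i) \<in> mons m"
  by (simp add: mons_def)

lemma mmult_cong: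
  assumes "\<And>b. b \<in> mons m \<Longrightarrow> P b = P' b" "\<And>b. b \<in> mons m \<Longrightarrow> f b = f' b"
  shows "mmult m P f = mmult m P' f'"
proof
  fix a show "mmult m P f a = mmult m P' f' a"
  proof (cases "a \<in> mons m")
    case True
    thus ?thesis unfolding mmult_apply[OF True] using assms lower_mons_mons
      by (intro sum.cong) auto
  qed (simp add: mmult_outside)
qed

lemma mmult_commute: "mmult m P Q = mmult m Q P"
proof
  fix a show "mmult m P Q a = mmult m Q P a"
  proof (cases "a \<in> mons m")
    case True
    show ?thesis unfolding mmult_apply[OF True]
      by (rule sum.reindex_bij_witness[of _ "\<lambda>b i. a i - b i" "\<lambda>b i. a i - b i"])
         (auto simp: lower_mons_diff True, auto simp: lower_mons_def)
  qed (simp add: mmult_outside)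
qed

lemma mmult_assoc: "mmult m P (mmult m Q f) = mmult m (mmult m P Q) f"
proof
  fix a show "mmult m P (mmult m Q f) a = mmult m (mmult m P Q) f a"
  proof (cases "a \<in> mons m")
    case True
    let ?D = "lower_mons m"
    have "mmult m P (mmult m Q f) a = (\<Sum>b\<in>?D a. \<Sum>c\<in>?D (\<lambda>i. a i - b i). P b * (Q c * f (\<lambda>i. a i - b i - c i)))"
      unfolding mmult_apply[OF True] by (intro sum.cong refl) (simp add: mmult_apply sum_distrib_left True)
    also have "\<dots> = (\<Sum>(b, c)\<in>Sigma (?D a) (\<lambda>b. ?D (\<lambda>i. a i - b i)). P b * (Q c * f (\<lambda>i. a i - b i - c i)))"
      by (rule sum.Sigma) auto
    also have "\<dots> = (\<Sum>(d, b)\<in>Sigma (?D a) ?D. P b * Q (\<lambda>i. d i - b i) * f (\<lambda>i. a i - d i))"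
      by (rule sum.reindex_bij_witness[of _ "\<lambda>(d, b). (b, \<lambda>i. d i - b i)" "\<lambda>(b, c). (\<lambda>i. b i + c i, b)"])
         (auto simp: lower_mons_def mons_def fun_eq_iff le_diff_conv2,
          (metis add.commute le_trans diff_le_mono)+)
    also have "\<dots> = (\<Sum>d\<in>?D a. \<Sum>b\<in>?D d. P b * Q (\<lambda>i. d i - b i) * f (\<lambda>i. a i - d i))"
      by (rule sum.Sigma[symmetric]) auto
    also have "\<dots> = mmult m (mmult m P Q) f a"
      unfolding mmult_apply[OF True] using lower_mons_mons
      by (intro sum.cong refl) (simp add: mmult_apply sum_distrib_right)
    finally show ?thesis .
  qed (simp add: mmult_outside)
qed

lemma mmult_left_commute: "mmult m P (mmult m Q f) = mmult m Q (mmult m P f)"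
  by (simp add: mmult_assoc mmult_commute[of m P Q])

lemma mmult_diff_right: "mmult m P (\<lambda>a. f a - g a) = (\<lambda>a. mmult m P f a - mmult m P g a)"
  and mmult_diff_left: "mmult m (\<lambda>a. P a - Q a) f = (\<lambda>a. mmult m P f a - mmult m Q f a)"
  and mmult_uminus_left: "mmult m (\<lambda>a. - P a) f = (\<lambda>a. - mmult m P f a)"
  and mmult_scale_right: "mmult m P (\<lambda>a. c * f a) = (\<lambda>a. c * mmult m P f a)"
  and mmult_scale_left: "mmult m (\<lambda>a. c * P a) f = (\<lambda>a. c * mmult m P f a)"
  and mmult_sum_right: "mmult m P (\<lambda>a. \<Sum>j\<in>J. h j a) = (\<lambda>a. \<Sum>j\<in>J. mmult m P (h j) a)"
  and mmult_sum_left: "mmult m (\<lambda>a. \<Sum>j\<in>J. R j a) f = (\<lambda>a. \<Sum>j\<in>J. mmult m (R j) f a)"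
  by (simp_all add: fun_eq_iff mmult_def ms_mult_def sum_subtractf sum_negf sum_distrib_left
      sum_distrib_right sum.swap[of _ J] algebra_simps)

lemma mmult_vanishing_left:
  assumes "\<forall>a\<in>mons m. P a = 0" shows "mmult m P f = (\<lambda>_. 0)"
  using assms by (auto simp: fun_eq_iff mmult_def ms_mult_def)

lemma mmult_monom_left:
  assumes "a \<in> mons m"
  shows "mmult m (mmonom \<beta>) f a = (if \<beta> \<in> lower_mons m a then f (\<lambda>i. a i - \<beta> i) else 0)"
proof -
  have "mmult m (mmonom \<beta>) f a = (\<Sum>b\<in>lower_mons m a. if b = \<beta> then f (\<lambda>i. a i - b i) else 0)"
    unfolding mmult_apply[OF assms] by (intro sum.cong) (auto simp: mmonom_def)
  also have "\<dots> = (if \<beta> \<in> lower_mons m a then f (\<lambda>i. a i - \<beta> i) else 0)" by (simp add: sum.delta)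
  finally show ?thesis .
qed

lemma digit_expansion_inj:
  fixes W :: nat
  assumes "\<forall>i<m. a i < W" "\<forall>i<m. b i < W" "(\<Sum>i<m. a i * W ^ i) = (\<Sum>i<m. b i * W ^ i)"
  shows "\<forall>i<m. a i = b i"
  using assms
proof (induction m arbitrary: a b)
  case (Suc m)
  have shift: "(\<Sum>i<Suc m. x i * W ^ i) = x 0 + W * (\<Sum>i<m. x (Suc i) * W ^ i)" for x :: "nat \<Rightarrow> nat"
    by (simp only: sum.lessThan_Suc_shift power_Suc sum_distrib_left mult.left_commute) simp
  have "a 0 < W" "b 0 < W" using Suc.prems by auto
  have e: "a 0 + W * (\<Sum>i<m. a (Suc i) * W ^ i) = b 0 + W * (\<Sum>i<m. b (Suc i) * W ^ i)"
    using Suc.prems(3) unfolding shift .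
  have "(a 0 + W * (\<Sum>i<m. a (Suc i) * W ^ i)) mod W = a 0" using \<open>a 0 < W\<close> by simp
  moreover have "(b 0 + W * (\<Sum>i<m. b (Suc i) * W ^ i)) mod W = b 0" using \<open>b 0 < W\<close> by simp
  ultimately have a0: "a 0 = b 0" using e by simp
  have "W > 0" using \<open>a 0 < W\<close> by simp
  with e a0 have "(\<Sum>i<m. a (Suc i) * W ^ i) = (\<Sum>i<m. b (Suc i) * W ^ i)" by simp
  moreover have "\<forall>i<m. a (Suc i) < W" "\<forall>i<m. b (Suc i) < W"
    using Suc.prems(1,2) by simp_all
  ultimately have "\<forall>i<m. a (Suc i) = b (Suc i)"
    using Suc.IH[of "\<lambda>i. a (Suc i)" "\<lambda>i. b (Suc i)"] by blast
  with a0 show ?case by (metis less_Suc_eq_0_disj)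
qed simp

lemma mons_weight_inj_on:
  assumes "finite S" "S \<subseteq> mons m"
  shows "\<exists>W. inj_on (\<lambda>a. \<Sum>i<m. a i * W ^ i) S"
proof -
  define W where "W = Suc (\<Sum>a\<in>S. \<Sum>i<m. a i)"
  have bound: "\<forall>i<m. a i < W" if "a \<in> S" for a
  proof (intro allI impI)
    fix i assume "i < m"
    hence "a i \<le> (\<Sum>i<m. a i)" by (intro member_le_sum) auto
    also have "\<dots> \<le> (\<Sum>a\<in>S. \<Sum>i<m. a i)"
      using that assms(1) by (intro member_le_sum[where f = "\<lambda>a. \<Sum>i<m. a i"]) auto
    finally show "a i < W" by (simp add: W_def)
  qed
  have "inj_on (\<lambda>a. \<Sum>i<m. a i * W ^ i) S"
  proof (rule inj_onI, rule ext)
    fix a b i assume ab: "a \<in> S" "b \<in> S" "(\<Sum>i<m. a i * W ^ i) = (\<Sum>i<m. b i * W ^ i)"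
    show "a i = b i"
    proof (cases "i < m")
      case True
      with ab bound digit_expansion_inj[of m a W b] show ?thesis by blast
    next
      case False
      have "a \<in> mons m" "b \<in> mons m" using ab(1,2) assms(2) by auto
      with False show ?thesis by (simp add: mons_def)
    qed
  qed
  then show ?thesis ..
qed

text \<open>The product of the coefficients of maximal weight in \<open>P\<close> and \<open>Q\<close> is the only contribution
  to the coefficient of their sum in \<open>P \<cdot> Q\<close>.\<close>
lemma mnonzero_mmult:
  assumes fP: "finite {a\<in>mons m. P a \<noteq> 0}" and fQ: "finite {a\<in>mons m. Q a \<noteq> 0}"
    and "mnonzero m P" "mnonzero m Q"
  shows "mnonzero m (mmult m P Q)"
proof -
  define SP where "SP = {a\<in>mons m. P a \<noteq> 0}"
  define SQ where "SQ = {a\<in>mons m. Q a \<noteq> 0}"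
  obtain W where inj: "inj_on (\<lambda>a. \<Sum>i<m. a i * W ^ i) (SP \<union> SQ)"
    using mons_weight_inj_on[of "SP \<union> SQ" m] fP fQ by (auto simp: SP_def SQ_def)
  define wt where "wt a = (\<Sum>i<m. a i * W ^ i)" for a :: "nat \<Rightarrow> nat"
  have wt_add: "wt (\<lambda>i. x i + y i) = wt x + wt y" for x y by (simp add: wt_def sum.distrib algebra_simps)
  have "finite SP" "SP \<noteq> {}" "finite SQ" "SQ \<noteq> {}"
    using assms by (auto simp: mnonzero_def SP_def SQ_def)
  then obtain A B where A: "A \<in> SP" "Max (wt ` SP) = wt A" and B: "B \<in> SQ" "Max (wt ` SQ) = wt B"
    using obtains_MAX by metis
  have Amax: "wt b \<le> wt A" if "b \<in> SP" for b
    unfolding A(2)[symmetric] using fP that by (intro Max_ge) (auto simp: SP_def)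
  have Bmax: "wt c \<le> wt B" if "c \<in> SQ" for c
    unfolding B(2)[symmetric] using fQ that by (intro Max_ge) (auto simp: SQ_def)
  define C where "C = (\<lambda>i. A i + B i)"
  have C: "C \<in> mons m" "A \<in> lower_mons m C" "(\<lambda>i. C i - A i) = B"
    using A B by (auto simp: C_def SP_def SQ_def mons_def lower_mons_def)
  have others: "P b * Q (\<lambda>i. C i - b i) = 0" if b: "b \<in> lower_mons m C - {A}" for b
  proof (rule ccontr)
    assume "P b * Q (\<lambda>i. C i - b i) \<noteq> 0"
    hence bP: "b \<in> SP" and cQ: "(\<lambda>i. C i - b i) \<in> SQ"
      using b lower_mons_mons C(1) by (auto simp: SP_def SQ_def)
    have "(\<lambda>i. b i + (C i - b i)) = C" using b by (auto simp: lower_mons_def)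
    hence "wt b + wt (\<lambda>i. C i - b i) = wt C" using wt_add[of b "\<lambda>i. C i - b i"] by simp
    also have "\<dots> = wt A + wt B" unfolding C_def by (rule wt_add)
    finally have "wt b + wt (\<lambda>i. C i - b i) = wt A + wt B" .
    hence "wt b = wt A" using Amax[OF bP] Bmax[OF cQ] by linarith
    hence "b = A" using inj bP A(1) by (auto simp: wt_def inj_on_def)
    with b show False by simp
  qed
  have "mmult m P Q C = P A * Q B + (\<Sum>b\<in>lower_mons m C - {A}. P b * Q (\<lambda>i. C i - b i))"
    unfolding mmult_apply[OF C(1)] using C by (subst sum.remove) auto
  also have "\<dots> = P A * Q B" using others by (simp add: sum.neutral)
  finally have "mmult m P Q C \<noteq> 0" using A(1) B(1) by (simp add: SP_def SQ_def)
  with C(1) show ?thesis unfolding mnonzero_def by blast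
qed

lemma mmult_nonzero_split:
  assumes "mmult m P Q a \<noteq> 0"
  shows "\<exists>b c. b \<in> mons m \<and> c \<in> mons m \<and> P b \<noteq> 0 \<and> Q c \<noteq> 0 \<and> a = (\<lambda>i. b i + c i)"
proof -
  have a: "a \<in> mons m" using assms mmult_outside by blast
  from assms obtain b where b: "b \<in> lower_mons m a" "P b * Q (\<lambda>i. a i - b i) \<noteq> 0"
    unfolding mmult_apply[OF a] using sum.not_neutral_contains_not_neutral by blast
  show ?thesis
    using b a lower_mons_mons[OF b(1)]
    by (intro exI[of _ b] exI[of _ "\<lambda>i. a i - b i"]) (auto simp: lower_mons_def)
qed

lemma mpoly_over_mmult:
  assumes E: "subfield_C E" and P: "mpoly_over m E P" and Q: "mpoly_over m E Q"
  shows "mpoly_over m E (mmult m P Q)"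
proof -
  have "{a\<in>mons m. mmult m P Q a \<noteq> 0} \<subseteq>
      (\<lambda>(b, c) i. b i + c i) ` ({a\<in>mons m. P a \<noteq> 0} \<times> {a\<in>mons m. Q a \<noteq> 0})"
    using mmult_nonzero_split by fastforce
  moreover have "mmult m P Q a \<in> E" for a
  proof (cases "a \<in> mons m")
    case True
    show ?thesis unfolding mmult_apply[OF True] using P Q lower_mons_mons True
      by (intro subfield_C_sum[OF E] subfield_C_mult[OF E]) (auto simp: mpoly_over_def)
  qed (simp add: mmult_outside subfield_C_zero[OF E])
  ultimately show ?thesis using P Q unfolding mpoly_over_def by (auto intro: finite_subset)
qed

lemma mnonzero_mpoly_mmult:
  "mpoly_over m E P \<Longrightarrow> mpoly_over m E Q \<Longrightarrow> mnonzero m P \<Longrightarrow> mnonzero m Q \<Longrightarrow> mnonzero m (mmult m P Q)"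
  by (rule mnonzero_mmult) (auto simp: mpoly_over_def)

lemma mpoly_over_add:
  assumes E: "subfield_C E" and "mpoly_over m E P" "mpoly_over m E Q"
  shows "mpoly_over m E (\<lambda>a. P a + Q a)"
proof -
  have "{a\<in>mons m. P a + Q a \<noteq> 0} \<subseteq> {a\<in>mons m. P a \<noteq> 0} \<union> {a\<in>mons m. Q a \<noteq> 0}" by auto
  thus ?thesis using assms subfield_C_add[OF E] unfolding mpoly_over_def by (auto intro: finite_subset)
qed

lemma mpoly_over_uminus:
  "subfield_C E \<Longrightarrow> mpoly_over m E P \<Longrightarrow> mpoly_over m E (\<lambda>a. - P a)"
  using subfield_C_uminus unfolding mpoly_over_def by auto

lemma mpoly_over_diff:
  assumes E: "subfield_C E" and "mpoly_over m E P" "mpoly_over m E Q"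
  shows "mpoly_over m E (\<lambda>a. P a - Q a)"
  using mpoly_over_add[OF E assms(2) mpoly_over_uminus[OF E assms(3)]] by simp

lemma mpoly_over_zero: "subfield_C E \<Longrightarrow> mpoly_over m E (\<lambda>_. 0)"
  by (simp add: mpoly_over_def subfield_C_zero)

lemma mpoly_over_sum:
  assumes E: "subfield_C E"
  shows "(\<And>j. j \<in> J \<Longrightarrow> mpoly_over m E (P j)) \<Longrightarrow> mpoly_over m E (\<lambda>a. \<Sum>j\<in>J. P j a)"
  by (induction J rule: infinite_finite_induct) (auto simp: mpoly_over_zero[OF E] mpoly_over_add[OF E])

lemma mpoly_over_scale:
  assumes E: "subfield_C E" and "c \<in> E" "mpoly_over m E P"
  shows "mpoly_over m E (\<lambda>a. c * P a)"
proof -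
  have "{a\<in>mons m. c * P a \<noteq> 0} \<subseteq> {a\<in>mons m. P a \<noteq> 0}" by auto
  thus ?thesis using assms subfield_C_mult[OF E] unfolding mpoly_over_def by (auto intro: finite_subset)
qed

lemma mpoly_over_mmonom: "subfield_C E \<Longrightarrow> mpoly_over m E (mmonom \<beta>)"
proof -
  assume E: "subfield_C E"
  have "{a\<in>mons m. mmonom \<beta> a \<noteq> 0} \<subseteq> {\<beta>}" by (auto simp: mmonom_def)
  thus ?thesis using E subfield_C_zero subfield_C_one unfolding mpoly_over_def
    by (auto simp: mmonom_def intro: finite_subset)
qed

lemma mnonzero_mone: "mnonzero m mone"
  by (auto simp: mnonzero_def mmonom_def mons_def)

text \<open>One step of Gaussian elimination: cross-multiplying with the coefficients of \<open>b \<gamma>0\<close> removes it.\<close>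
lemma mmult_span_eliminate:
  assumes "finite B" "\<gamma>0 \<notin> B"
    and f: "f = (\<lambda>a. \<Sum>\<gamma>\<in>insert \<gamma>0 B. mmult m (p \<gamma>) (b \<gamma>) a)"
    and g: "g = (\<lambda>a. \<Sum>\<gamma>\<in>insert \<gamma>0 B. mmult m (q \<gamma>) (b \<gamma>) a)"
  shows "(\<lambda>a. mmult m (q \<gamma>0) f a - mmult m (p \<gamma>0) g a)
       = (\<lambda>a. \<Sum>\<gamma>\<in>B. mmult m (\<lambda>a. mmult m (q \<gamma>0) (p \<gamma>) a - mmult m (p \<gamma>0) (q \<gamma>) a) (b \<gamma>) a)"
proof
  fix a
  have expand: "mmult m P (\<lambda>a. \<Sum>\<gamma>\<in>insert \<gamma>0 B. mmult m (r \<gamma>) (b \<gamma>) a)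
      = (\<lambda>a. \<Sum>\<gamma>\<in>insert \<gamma>0 B. mmult m (mmult m P (r \<gamma>)) (b \<gamma>) a)" for P r
    by (simp add: mmult_sum_right mmult_assoc)
  have "mmult m (q \<gamma>0) f a - mmult m (p \<gamma>0) g a
      = (\<Sum>\<gamma>\<in>insert \<gamma>0 B. mmult m (mmult m (q \<gamma>0) (p \<gamma>)) (b \<gamma>) a)
        - (\<Sum>\<gamma>\<in>insert \<gamma>0 B. mmult m (mmult m (p \<gamma>0) (q \<gamma>)) (b \<gamma>) a)"
    unfolding f g expand ..
  also have "\<dots> = (\<Sum>\<gamma>\<in>B. mmult m (mmult m (q \<gamma>0) (p \<gamma>)) (b \<gamma>) a)
                   - (\<Sum>\<gamma>\<in>B. mmult m (mmult m (p \<gamma>0) (q \<gamma>)) (b \<gamma>) a)"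
    using assms(1,2) by (simp add: mmult_commute[of m "p \<gamma>0" "q \<gamma>0"])
  also have "\<dots> = (\<Sum>\<gamma>\<in>B. mmult m (\<lambda>a. mmult m (q \<gamma>0) (p \<gamma>) a - mmult m (p \<gamma>0) (q \<gamma>) a) (b \<gamma>) a)"
    unfolding sum_subtractf[symmetric] mmult_diff_left ..
  finally show "mmult m (q \<gamma>0) f a - mmult m (p \<gamma>0) g a
      = (\<Sum>\<gamma>\<in>B. mmult m (\<lambda>a. mmult m (q \<gamma>0) (p \<gamma>) a - mmult m (p \<gamma>0) (q \<gamma>) a) (b \<gamma>) a)" .
qed

lemma mmult_sum_combination:
  "(\<Sum>j\<in>J. mmult m (c j) (\<lambda>a. mmult m \<pi> (f j) a - mmult m (q j) g a) a)
   = (\<Sum>j\<in>J. mmult m (mmult m (c j) \<pi>) (f j) a) + mmult m (\<lambda>a. - (\<Sum>j\<in>J. mmult m (c j) (q j) a)) g a"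
  by (simp add: mmult_diff_right mmult_assoc mmult_uminus_left mmult_sum_left sum_subtractf)

lemma mpoly_span_dependent:
  fixes B :: "'g set" and b :: "'g \<Rightarrow> (nat \<Rightarrow> nat) \<Rightarrow> complex"
    and I :: "'i set" and f :: "'i \<Rightarrow> (nat \<Rightarrow> nat) \<Rightarrow> complex"
  assumes E: "subfield_C E" and "finite B"
  shows "finite I \<Longrightarrow> card B < card I \<Longrightarrow> \<forall>i\<in>I. \<forall>\<gamma>\<in>B. mpoly_over m E (p i \<gamma>) \<Longrightarrow>
    \<forall>i\<in>I. f i = (\<lambda>a. \<Sum>\<gamma>\<in>B. mmult m (p i \<gamma>) (b \<gamma>) a) \<Longrightarrow>
    \<exists>c. (\<forall>i\<in>I. mpoly_over m E (c i)) \<and> (\<exists>i\<in>I. mnonzero m (c i)) \<and>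
        (\<lambda>a. \<Sum>i\<in>I. mmult m (c i) (f i) a) = (\<lambda>_. 0)"
  using \<open>finite B\<close>
proof (induction B arbitrary: I p f rule: finite_induct)
  case empty
  then obtain i0 where i0: "i0 \<in> I" by fastforce
  define c where "c i = (if i = i0 then mone else (\<lambda>_. 0))" for i :: 'i
  have "mmult m (c i) (f i) a = 0" if "i \<in> I" for i a
    using empty.prems(4) that by (simp add: mmult_def ms_mult_def)
  hence "(\<lambda>a. \<Sum>i\<in>I. mmult m (c i) (f i) a) = (\<lambda>_. 0)" by (simp add: fun_eq_iff)
  moreover have "\<forall>i\<in>I. mpoly_over m E (c i)"
    by (simp add: c_def mpoly_over_mmonom[OF E] mpoly_over_zero[OF E])
  ultimately show ?case using i0 mnonzero_mone by (intro exI[of _ c]) (auto simp: c_def)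
next
  case (insert \<gamma>0 B)
  show ?case
  proof (cases "\<forall>i\<in>I. \<forall>a\<in>mons m. p i \<gamma>0 a = 0")
    case True
    hence "\<forall>i\<in>I. f i = (\<lambda>a. \<Sum>\<gamma>\<in>B. mmult m (p i \<gamma>) (b \<gamma>) a)"
      using insert.prems(4) insert.hyps by (simp add: mmult_vanishing_left)
    thus ?thesis using insert.IH[of I p f] insert.prems(1-3) insert.hyps by simp
  next
    case False
    then obtain i0 where i0: "i0 \<in> I" and nonzero: "mnonzero m (p i0 \<gamma>0)"
      by (auto simp: mnonzero_def)
    define \<pi> where "\<pi> = p i0 \<gamma>0"
    define I' where "I' = I - {i0}"
    define f' where "f' i = (\<lambda>a. mmult m \<pi> (f i) a - mmult m (p i \<gamma>0) (f i0) a)" for i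
    define p' where "p' i \<gamma> = (\<lambda>a. mmult m \<pi> (p i \<gamma>) a - mmult m (p i \<gamma>0) (p i0 \<gamma>) a)" for i \<gamma>
    have \<pi>: "mpoly_over m E \<pi>" using insert.prems(3) i0 by (simp add: \<pi>_def)
    have "\<forall>i\<in>I'. f' i = (\<lambda>a. \<Sum>\<gamma>\<in>B. mmult m (p' i \<gamma>) (b \<gamma>) a)"
      unfolding f'_def p'_def \<pi>_def using insert.prems(4) i0
      by (intro ballI mmult_span_eliminate[OF insert.hyps]) (auto simp: I'_def)
    moreover have "\<forall>i\<in>I'. \<forall>\<gamma>\<in>B. mpoly_over m E (p' i \<gamma>)"
      unfolding p'_def using insert.prems(3) i0 \<pi>
      by (auto simp: I'_def intro!: mpoly_over_diff[OF E] mpoly_over_mmult[OF E])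
    moreover have "finite I'" "card B < card I'"
      using insert.prems(1,2) insert.hyps i0 by (simp_all add: I'_def)
    ultimately obtain c' where c': "\<forall>i\<in>I'. mpoly_over m E (c' i)" "\<exists>i\<in>I'. mnonzero m (c' i)"
      and c'_rel: "(\<lambda>a. \<Sum>i\<in>I'. mmult m (c' i) (f' i) a) = (\<lambda>_. 0)"
      using insert.IH[of I' p' f'] by blast
    define c where "c i = (if i = i0 then (\<lambda>a. - (\<Sum>j\<in>I'. mmult m (c' j) (p j \<gamma>0) a))
                          else mmult m (c' i) \<pi>)" for i
    have "(\<Sum>i\<in>I. mmult m (c i) (f i) a) = (\<Sum>i\<in>I'. mmult m (c' i) (f' i) a)" for a
    proof -
      have "(\<Sum>i\<in>I. mmult m (c i) (f i) a) = mmult m (c i0) (f i0) a + (\<Sum>i\<in>I'. mmult m (c i) (f i) a)"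
        unfolding I'_def using i0 insert.prems(1) by (subst sum.remove) auto
      also have "\<dots> = (\<Sum>i\<in>I'. mmult m (c' i) (f' i) a)"
        using mmult_sum_combination[where m = m and c = c' and \<pi> = \<pi> and f = f and J = I' and q = "\<lambda>j. p j \<gamma>0" and g = "f i0"]
        by (simp add: c_def I'_def f'_def add.commute)
      finally show ?thesis .
    qed
    hence "(\<lambda>a. \<Sum>i\<in>I. mmult m (c i) (f i) a) = (\<lambda>_. 0)" using c'_rel by (simp add: fun_eq_iff)
    moreover have "\<forall>i\<in>I. mpoly_over m E (c i)"
      using c'(1) insert.prems(3) i0 \<pi>
      by (auto simp: c_def I'_def intro!: mpoly_over_uminus[OF E] mpoly_over_sum[OF E] mpoly_over_mmult[OF E])
    moreover obtain i1 where "i1 \<in> I'" "mnonzero m (c' i1)" using c'(2) by blast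
    hence "i1 \<in> I" "mnonzero m (c i1)"
      using c'(1) \<pi> nonzero by (auto simp: c_def I'_def \<pi>_def intro: mnonzero_mpoly_mmult)
    ultimately show ?thesis by blast
  qed
qed

lemma mpoly_common_denominator:
  fixes B S :: "'g set" and d :: "'g \<Rightarrow> (nat \<Rightarrow> nat) \<Rightarrow> complex"
  assumes E: "subfield_C E" and "finite S"
    and "\<forall>\<beta>\<in>S. \<exists>q p. mpoly_over m E q \<and> mnonzero m q \<and> (\<forall>\<gamma>\<in>B. mpoly_over m E (p \<gamma>)) \<and>
              mmult m q (d \<beta>) = (\<lambda>a. \<Sum>\<gamma>\<in>B. mmult m (p \<gamma>) (d \<gamma>) a)"
  shows "\<exists>D P. mpoly_over m E D \<and> mnonzero m D \<and> (\<forall>\<beta>\<in>S. \<forall>\<gamma>\<in>B. mpoly_over m E (P \<beta> \<gamma>)) \<and>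
              (\<forall>\<beta>\<in>S. mmult m D (d \<beta>) = (\<lambda>a. \<Sum>\<gamma>\<in>B. mmult m (P \<beta> \<gamma>) (d \<gamma>) a))"
  using assms(2,3)
proof (induction S rule: finite_induct)
  case empty
  show ?case using mpoly_over_mmonom[OF E] mnonzero_mone by blast
next
  case (insert \<beta>0 S)
  obtain D P where D: "mpoly_over m E D" "mnonzero m D" and P: "\<forall>\<beta>\<in>S. \<forall>\<gamma>\<in>B. mpoly_over m E (P \<beta> \<gamma>)"
    and rel: "\<forall>\<beta>\<in>S. mmult m D (d \<beta>) = (\<lambda>a. \<Sum>\<gamma>\<in>B. mmult m (P \<beta> \<gamma>) (d \<gamma>) a)"
    using insert.IH insert.prems by auto
  obtain q0 p0 where q0: "mpoly_over m E q0" "mnonzero m q0" and p0: "\<forall>\<gamma>\<in>B. mpoly_over m E (p0 \<gamma>)"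
    and rel0: "mmult m q0 (d \<beta>0) = (\<lambda>a. \<Sum>\<gamma>\<in>B. mmult m (p0 \<gamma>) (d \<gamma>) a)"
    using insert.prems by auto
  define P' where "P' \<beta> \<gamma> = (if \<beta> = \<beta>0 then mmult m D (p0 \<gamma>) else mmult m q0 (P \<beta> \<gamma>))" for \<beta> \<gamma>
  have "\<forall>\<beta>\<in>insert \<beta>0 S. mmult m (mmult m q0 D) (d \<beta>) = (\<lambda>a. \<Sum>\<gamma>\<in>B. mmult m (P' \<beta> \<gamma>) (d \<gamma>) a)"
  proof
    fix \<beta> assume "\<beta> \<in> insert \<beta>0 S"
    then consider "\<beta> = \<beta>0" | "\<beta> \<noteq> \<beta>0" "\<beta> \<in> S" by blast
    then show "mmult m (mmult m q0 D) (d \<beta>) = (\<lambda>a. \<Sum>\<gamma>\<in>B. mmult m (P' \<beta> \<gamma>) (d \<gamma>) a)"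
    proof cases
      case 1
      have "mmult m (mmult m q0 D) (d \<beta>) = mmult m D (mmult m q0 (d \<beta>0))"
        by (simp add: mmult_assoc mmult_commute[of m q0 D] 1)
      then show ?thesis unfolding rel0 by (simp add: mmult_sum_right mmult_assoc P'_def 1)
    next
      case 2
      have "mmult m (mmult m q0 D) (d \<beta>) = mmult m q0 (mmult m D (d \<beta>))" by (simp add: mmult_assoc)
      then show ?thesis using rel 2 by (simp add: mmult_sum_right mmult_assoc P'_def)
    qed
  qed
  moreover have "\<forall>\<beta>\<in>insert \<beta>0 S. \<forall>\<gamma>\<in>B. mpoly_over m E (P' \<beta> \<gamma>)"
    using P p0 D q0 by (auto simp: P'_def intro!: mpoly_over_mmult[OF E])
  ultimately show ?case
    using mpoly_over_mmult[OF E q0(1) D(1)] mnonzero_mpoly_mmult[OF q0(1) D(1) q0(2) D(2)] by blast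
qed

section \<open>The Euler operator\<close>

definition falling :: "nat \<Rightarrow> nat \<Rightarrow> complex" where
  "falling x b = (\<Prod>j<b. of_nat x - of_nat j)"

lemma falling_Suc: "falling x (Suc b) = falling x b * (of_nat x - of_nat b)"
  by (simp add: falling_def)

lemma falling_eq_0: "x < b \<Longrightarrow> falling x b = 0"
  unfolding falling_def by (rule prod_zero) (auto intro: bexI[of _ x])

lemma pochhammer_eq_falling:
  assumes "b \<le> x"
  shows "pochhammer (of_nat (x - b + 1) :: complex) b = falling x b"
proof -
  have "pochhammer (of_nat (x - b + 1) :: complex) b = (\<Prod>i<b. of_nat (x - b + 1) + of_nat i)"
    by (simp add: pochhammer_prod atLeast0LessThan)
  also have "\<dots> = (\<Prod>i<b. of_nat x - of_nat (b - Suc i))"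
  proof (rule prod.cong[OF refl])
    fix i assume "i \<in> {..<b}"
    hence "x - b + 1 + i = x - (b - Suc i)" "b - Suc i \<le> x" using assms by auto
    thus "(of_nat (x - b + 1) :: complex) + of_nat i = of_nat x - of_nat (b - Suc i)"
      by (metis of_nat_add of_nat_diff)
  qed
  also have "\<dots> = falling x b"
    unfolding falling_def by (rule prod.nat_diff_reindex)
  finally show ?thesis .
qed

lemma mmult_monom_ms_deriv:
  assumes \<beta>: "\<beta> \<in> mons m" and a: "a \<in> mons m"
  shows "mmult m (mmonom \<beta>) (ms_deriv m \<beta> F) a = (\<Prod>i<m. falling (a i) (\<beta> i)) * F a"
proof (cases "\<beta> \<in> lower_mons m a")
  case True
  hence le: "\<And>i. \<beta> i \<le> a i" by (simp add: lower_mons_def)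
  have e: "(\<lambda>i. a i - \<beta> i + \<beta> i) = a" using le by auto
  show ?thesis
    unfolding mmult_monom_left[OF a] ms_deriv_def e using True le pochhammer_eq_falling
    by (simp add: add.commute)
next
  case False
  then obtain i where i: "a i < \<beta> i" using \<beta> by (auto simp: lower_mons_def not_le)
  have "i < m" using i a \<beta> by (auto simp: mons_def) (metis less_irrefl not_le)
  hence "(\<Prod>i<m. falling (a i) (\<beta> i)) = 0" using falling_eq_0[OF i] by (intro prod_zero) auto
  thus ?thesis using mmult_monom_left[OF a] False by simp
qed

lemma sum_times_prod_falling:
  fixes a \<beta> :: "nat \<Rightarrow> nat"
  shows "of_nat (\<Sum>i<m. a i) * (\<Prod>j<m. falling (a j) (\<beta> j)) =
     (\<Sum>i<m. \<Prod>j<m. falling (a j) ((\<beta>(i := Suc (\<beta> i))) j)) + of_nat (\<Sum>i<m. \<beta> i) * (\<Prod>j<m. falling (a j) (\<beta> j))"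
proof -
  define PP where "PP = (\<Prod>j<m. falling (a j) (\<beta> j))"
  have "(\<Prod>j<m. falling (a j) ((\<beta>(i := Suc (\<beta> i))) j)) = (of_nat (a i) - of_nat (\<beta> i)) * PP"
    if i: "i < m" for i
  proof -
    have "(\<Prod>j<m. falling (a j) ((\<beta>(i := Suc (\<beta> i))) j)) =
        falling (a i) (Suc (\<beta> i)) * (\<Prod>j\<in>{..<m} - {i}. falling (a j) (\<beta> j))"
      using i by (subst prod.remove[of _ i]) (auto intro!: prod.cong)
    also have "\<dots> = (of_nat (a i) - of_nat (\<beta> i)) * (falling (a i) (\<beta> i) * (\<Prod>j\<in>{..<m} - {i}. falling (a j) (\<beta> j)))"
      by (simp add: falling_Suc algebra_simps)
    also have "falling (a i) (\<beta> i) * (\<Prod>j\<in>{..<m} - {i}. falling (a j) (\<beta> j)) = PP"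
      unfolding PP_def using i by (subst prod.remove[of _ i]) auto
    finally show ?thesis .
  qed
  hence "(\<Sum>i<m. \<Prod>j<m. falling (a j) ((\<beta>(i := Suc (\<beta> i))) j)) = (\<Sum>i<m. (of_nat (a i) - of_nat (\<beta> i)) * PP)"
    by simp
  also have "\<dots> = of_nat (\<Sum>i<m. a i) * PP - of_nat (\<Sum>i<m. \<beta> i) * PP"
    by (simp add: sum_subtractf sum_distrib_right left_diff_distrib)
  finally show ?thesis unfolding PP_def by simp
qed

text \<open>\<open>euler_pow m F k\<close> is \<open>\<theta>\<^sup>k F\<close>: the Euler operator \<open>\<theta> = x\<^sub>1\<partial>\<^sub>1 + \<dots> + x\<^sub>m\<partial>\<^sub>m\<close> multiplies the
  coefficient of \<open>x\<^sup>a\<close> by the total degree of \<open>a\<close>.\<close>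
definition euler_pow :: "nat \<Rightarrow> ((nat \<Rightarrow> nat) \<Rightarrow> complex) \<Rightarrow> nat \<Rightarrow> (nat \<Rightarrow> nat) \<Rightarrow> complex" where
  "euler_pow m F k = (\<lambda>a. (of_nat (\<Sum>i<m. a i)) ^ k * F a)"

text \<open>\<open>\<theta>\<^sup>k\<close> is a combination of the operators \<open>x\<^sup>\<beta> \<partial>\<^sup>\<beta>\<close> with natural coefficients.\<close>
lemma euler_power_falling_expansion_list:
  "\<exists>L :: ((nat \<Rightarrow> nat) \<times> nat) list. (\<forall>x\<in>set L. fst x \<in> mons m) \<and>
     (\<forall>a. (of_nat (\<Sum>i<m. a i) :: complex) ^ k = (\<Sum>x\<leftarrow>L. of_nat (snd x) * (\<Prod>j<m. falling (a j) (fst x j))))"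
proof (induction k)
  case 0
  show ?case by (intro exI[of _ "[(\<lambda>_. 0, 1)]"]) (auto simp: mons_def falling_def)
next
  case (Suc k)
  then obtain L where L: "\<forall>x\<in>set L. fst x \<in> mons m"
    and e: "\<forall>a. (of_nat (\<Sum>i<m. a i) :: complex) ^ k = (\<Sum>x\<leftarrow>L. of_nat (snd x) * (\<Prod>j<m. falling (a j) (fst x j)))"
    by blast
  define step where "step x = map (\<lambda>i. ((fst x)(i := Suc (fst x i)), snd x)) [0..<m]
      @ [(fst x, snd x * (\<Sum>i<m. fst x i))]" for x :: "(nat \<Rightarrow> nat) \<times> nat"
  define L' where "L' = concat (map step L)"
  have "\<forall>x\<in>set L'. fst x \<in> mons m"
    using L by (auto simp: L'_def step_def mons_def)
  moreover have "(of_nat (\<Sum>i<m. a i) :: complex) ^ Suc k = (\<Sum>x\<leftarrow>L'. of_nat (snd x) * (\<Prod>j<m. falling (a j) (fst x j)))"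
    for a :: "nat \<Rightarrow> nat"
  proof -
    let ?h = "\<lambda>x. of_nat (snd x) * (\<Prod>j<m. falling (a j) (fst x j)) :: complex"
    have "sum_list (map ?h (step x)) = of_nat (\<Sum>i<m. a i) * ?h x" for x
    proof -
      have "sum_list (map ?h (step x)) = of_nat (snd x) * ((\<Sum>i<m. \<Prod>j<m. falling (a j) (((fst x)(i := Suc (fst x i))) j))
          + of_nat (\<Sum>i<m. fst x i) * (\<Prod>j<m. falling (a j) (fst x j)))"
        by (simp add: step_def sum_set_upt_conv_sum_list_nat[symmetric] atLeast0LessThan o_def
            sum_distrib_left sum_distrib_right mult_ac distrib_left)
      also have "\<dots> = of_nat (\<Sum>i<m. a i) * ?h x"
        using sum_times_prod_falling[where a = a and \<beta> = "fst x" and m = m] by (simp add: mult_ac)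
      finally show ?thesis .
    qed
    moreover have "sum_list (map ?h (concat (map step xs))) = sum_list (map (\<lambda>x. sum_list (map ?h (step x))) xs)"
      for xs by (induction xs) auto
    ultimately have "sum_list (map ?h L') = of_nat (\<Sum>i<m. a i) * sum_list (map ?h L)"
      by (simp add: L'_def sum_list_const_mult)
    thus ?thesis using e by simp
  qed
  ultimately show ?case by blast
qed

lemma euler_power_falling_expansion:
  "\<exists>(n :: nat \<Rightarrow> nat) (\<beta> :: nat \<Rightarrow> nat \<Rightarrow> nat \<Rightarrow> nat) (c :: nat \<Rightarrow> nat \<Rightarrow> nat).
     \<forall>k. (\<forall>j<n k. \<beta> k j \<in> mons m) \<and>
       (\<forall>a. (of_nat (\<Sum>i<m. a i) :: complex) ^ k = (\<Sum>j<n k. of_nat (c k j) * (\<Prod>i<m. falling (a i) (\<beta> k j i))))"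
proof -
  have "\<exists>n (\<beta> :: nat \<Rightarrow> nat \<Rightarrow> nat) (c :: nat \<Rightarrow> nat). (\<forall>j<n. \<beta> j \<in> mons m) \<and>
     (\<forall>a. (of_nat (\<Sum>i<m. a i) :: complex) ^ k = (\<Sum>j<n. of_nat (c j) * (\<Prod>i<m. falling (a i) (\<beta> j i))))"
    for k
  proof -
    obtain L :: "((nat \<Rightarrow> nat) \<times> nat) list" where L: "\<forall>x\<in>set L. fst x \<in> mons m"
      and e: "\<forall>a. (of_nat (\<Sum>i<m. a i) :: complex) ^ k = (\<Sum>x\<leftarrow>L. of_nat (snd x) * (\<Prod>j<m. falling (a j) (fst x j)))"
      using euler_power_falling_expansion_list by blast
    show ?thesis
      using L e by (intro exI[of _ "length L"] exI[of _ "\<lambda>j. fst (L ! j)"] exI[of _ "\<lambda>j. snd (L ! j)"])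
        (simp add: sum_list_sum_nth atLeast0LessThan)
  qed
  then have "\<forall>k. \<exists>n (\<beta> :: nat \<Rightarrow> nat \<Rightarrow> nat) (c :: nat \<Rightarrow> nat). (\<forall>j<n. \<beta> j \<in> mons m) \<and>
     (\<forall>a. (of_nat (\<Sum>i<m. a i) :: complex) ^ k = (\<Sum>j<n. of_nat (c j) * (\<Prod>i<m. falling (a i) (\<beta> j i))))"
    by blast
  then show ?thesis unfolding choice_iff .
qed

lemma euler_pow_mmult_span:
  assumes \<beta>: "\<forall>j<n. \<beta> j \<in> mons m"
    and expansion: "\<forall>a. (of_nat (\<Sum>i<m. a i) :: complex) ^ k = (\<Sum>j<n. of_nat (c j) * (\<Prod>i<m. falling (a i) (\<beta> j i)))"
    and rel: "\<forall>j<n. mmult m D (ms_deriv m (\<beta> j) F) = (\<lambda>a. \<Sum>\<gamma>\<in>B. mmult m (P (\<beta> j) \<gamma>) (ms_deriv m \<gamma> F) a)"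
  shows "mmult m D (euler_pow m F k) = (\<lambda>a. \<Sum>\<gamma>\<in>B.
           mmult m (\<lambda>b. \<Sum>j<n. of_nat (c j) * mmult m (mmonom (\<beta> j)) (P (\<beta> j) \<gamma>) b) (ms_deriv m \<gamma> F) a)"
proof -
  have "euler_pow m F k b = (\<Sum>j<n. of_nat (c j) * mmult m (mmonom (\<beta> j)) (ms_deriv m (\<beta> j) F) b)"
    if b: "b \<in> mons m" for b
  proof -
    have "euler_pow m F k b = (\<Sum>j<n. of_nat (c j) * (\<Prod>i<m. falling (b i) (\<beta> j i))) * F b"
      using expansion by (simp add: euler_pow_def del: of_nat_sum)
    also have "\<dots> = (\<Sum>j<n. of_nat (c j) * mmult m (mmonom (\<beta> j)) (ms_deriv m (\<beta> j) F) b)"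
      using \<beta> b by (simp add: sum_distrib_right mmult_monom_ms_deriv mult.assoc)
    finally show ?thesis .
  qed
  hence "mmult m D (euler_pow m F k)
      = mmult m D (\<lambda>b. \<Sum>j<n. of_nat (c j) * mmult m (mmonom (\<beta> j)) (ms_deriv m (\<beta> j) F) b)"
    by (intro mmult_cong) simp_all
  also have "\<dots> = (\<lambda>a. \<Sum>j<n. of_nat (c j) * mmult m (mmonom (\<beta> j)) (mmult m D (ms_deriv m (\<beta> j) F)) a)"
    by (simp add: mmult_sum_right mmult_scale_right mmult_left_commute)
  also have "\<dots> = (\<lambda>a. \<Sum>j<n. of_nat (c j) *
                      (\<Sum>\<gamma>\<in>B. mmult m (mmult m (mmonom (\<beta> j)) (P (\<beta> j) \<gamma>)) (ms_deriv m \<gamma> F) a))"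
    using rel by (intro ext sum.cong refl) (simp add: mmult_sum_right mmult_assoc)
  also have "\<dots> = (\<lambda>a. \<Sum>\<gamma>\<in>B.
           mmult m (\<lambda>b. \<Sum>j<n. of_nat (c j) * mmult m (mmonom (\<beta> j)) (P (\<beta> j) \<gamma>) b) (ms_deriv m \<gamma> F) a)"
    by (simp add: mmult_sum_left mmult_scale_left sum_distrib_left sum.swap[of _ B])
  finally show ?thesis .
qed

lemma dfinite_mmult:
  assumes "dfinite m E F"
  obtains B where "finite B" "\<forall>\<beta>\<in>mons m. \<exists>q p. mpoly_over m E q \<and> mnonzero m q \<and>
     (\<forall>\<gamma>\<in>B. mpoly_over m E (p \<gamma>)) \<and>
     mmult m q (ms_deriv m \<beta> F) = (\<lambda>a. \<Sum>\<gamma>\<in>B. mmult m (p \<gamma>) (ms_deriv m \<gamma> F) a)"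
proof -
  obtain B where "finite B" and H: "\<forall>\<beta>\<in>mons m. \<exists>q p. mpoly_over m E q \<and> (\<exists>a\<in>mons m. q a \<noteq> 0) \<and>
        (\<forall>\<gamma>\<in>B. mpoly_over m E (p \<gamma>)) \<and>
        (\<forall>a\<in>mons m. ms_mult m q (ms_deriv m \<beta> F) a = (\<Sum>\<gamma>\<in>B. ms_mult m (p \<gamma>) (ms_deriv m \<gamma> F) a))"
    using assms unfolding dfinite_def by blast
  have eq: "(\<forall>a\<in>mons m. ms_mult m q G a = (\<Sum>\<gamma>\<in>B. ms_mult m (p \<gamma>) (d \<gamma>) a)) \<longleftrightarrow>
      mmult m q G = (\<lambda>a. \<Sum>\<gamma>\<in>B. mmult m (p \<gamma>) (d \<gamma>) a)" for q p G d
    by (auto simp: mmult_def fun_eq_iff)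
  show ?thesis
  proof (rule that[OF \<open>finite B\<close>], intro ballI)
    fix \<beta> assume "\<beta> \<in> mons m"
    with H obtain q p where "mpoly_over m E q" "\<exists>a\<in>mons m. q a \<noteq> 0" "\<forall>\<gamma>\<in>B. mpoly_over m E (p \<gamma>)"
      "\<forall>a\<in>mons m. ms_mult m q (ms_deriv m \<beta> F) a = (\<Sum>\<gamma>\<in>B. ms_mult m (p \<gamma>) (ms_deriv m \<gamma> F) a)"
      by blast
    then show "\<exists>q p. mpoly_over m E q \<and> mnonzero m q \<and> (\<forall>\<gamma>\<in>B. mpoly_over m E (p \<gamma>)) \<and>
        mmult m q (ms_deriv m \<beta> F) = (\<lambda>a. \<Sum>\<gamma>\<in>B. mmult m (p \<gamma>) (ms_deriv m \<gamma> F) a)"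
      unfolding eq mnonzero_def by blast
  qed
qed

lemma dfinite_euler_pow_span:
  assumes E: "subfield_C E" and "dfinite m E F"
  obtains B where "finite B" "\<And>R. \<exists>D P. mpoly_over m E D \<and> mnonzero m D \<and>
      (\<forall>k\<le>R. \<forall>\<gamma>\<in>B. mpoly_over m E (P k \<gamma>)) \<and>
      (\<forall>k\<le>R. mmult m D (euler_pow m F k) = (\<lambda>a. \<Sum>\<gamma>\<in>B. mmult m (P k \<gamma>) (ms_deriv m \<gamma> F) a))"
proof -
  obtain B where B: "finite B" and H: "\<forall>\<beta>\<in>mons m. \<exists>q p. mpoly_over m E q \<and> mnonzero m q \<and>
     (\<forall>\<gamma>\<in>B. mpoly_over m E (p \<gamma>)) \<and>
     mmult m q (ms_deriv m \<beta> F) = (\<lambda>a. \<Sum>\<gamma>\<in>B. mmult m (p \<gamma>) (ms_deriv m \<gamma> F) a)"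
    using dfinite_mmult[OF assms(2)] by blast
  have "\<exists>D P. mpoly_over m E D \<and> mnonzero m D \<and>
      (\<forall>k\<le>R. \<forall>\<gamma>\<in>B. mpoly_over m E (P k \<gamma>)) \<and>
      (\<forall>k\<le>R. mmult m D (euler_pow m F k) = (\<lambda>a. \<Sum>\<gamma>\<in>B. mmult m (P k \<gamma>) (ms_deriv m \<gamma> F) a))" for R
  proof -
    obtain n :: "nat \<Rightarrow> nat" and \<beta> :: "nat \<Rightarrow> nat \<Rightarrow> nat \<Rightarrow> nat" and c :: "nat \<Rightarrow> nat \<Rightarrow> nat"
      where \<beta>: "\<And>k. \<forall>j<n k. \<beta> k j \<in> mons m"
        and expansion: "\<And>k. \<forall>a. (of_nat (\<Sum>i<m. a i) :: complex) ^ k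
                          = (\<Sum>j<n k. of_nat (c k j) * (\<Prod>i<m. falling (a i) (\<beta> k j i)))"
      using euler_power_falling_expansion[of m] by blast
    define S where "S = (\<Union>k\<le>R. \<beta> k ` {..<n k})"
    have "finite S" "S \<subseteq> mons m" using \<beta> by (auto simp: S_def)
    then obtain D P where D: "mpoly_over m E D" "mnonzero m D"
      and P: "\<forall>\<beta>\<in>S. \<forall>\<gamma>\<in>B. mpoly_over m E (P \<beta> \<gamma>)"
      and rel: "\<forall>\<beta>\<in>S. mmult m D (ms_deriv m \<beta> F) = (\<lambda>a. \<Sum>\<gamma>\<in>B. mmult m (P \<beta> \<gamma>) (ms_deriv m \<gamma> F) a)"
      using mpoly_common_denominator[OF E, where S = S and B = B and d = "\<lambda>\<beta>. ms_deriv m \<beta> F"] H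
      by blast
    define Pk where "Pk k \<gamma> = (\<lambda>b. \<Sum>j<n k. of_nat (c k j) * mmult m (mmonom (\<beta> k j)) (P (\<beta> k j) \<gamma>) b)"
      for k \<gamma>
    have "\<forall>k\<le>R. mmult m D (euler_pow m F k) = (\<lambda>a. \<Sum>\<gamma>\<in>B. mmult m (Pk k \<gamma>) (ms_deriv m \<gamma> F) a)"
      unfolding Pk_def using rel \<beta> expansion by (intro allI impI euler_pow_mmult_span) (auto simp: S_def)
    moreover have "\<forall>k\<le>R. \<forall>\<gamma>\<in>B. mpoly_over m E (Pk k \<gamma>)"
      unfolding Pk_def using P
      by (auto simp: S_def intro!: mpoly_over_sum[OF E] mpoly_over_scale[OF E] subfield_C_of_nat[OF E]
          mpoly_over_mmult[OF E] mpoly_over_mmonom[OF E])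
    ultimately show ?thesis using D by blast
  qed
  with B that show ?thesis by blast
qed

lemma mmult_relation_leading_nonzero:
  fixes R :: nat and c :: "nat \<Rightarrow> (nat \<Rightarrow> nat) \<Rightarrow> complex"
  assumes rel: "(\<lambda>a. \<Sum>k\<le>R. mmult m (c k) (f k) a) = (\<lambda>_. 0)" and "\<exists>k\<le>R. mnonzero m (c k)"
  shows "\<exists>r\<le>R. mnonzero m (c r) \<and> (\<lambda>a. \<Sum>k\<le>r. mmult m (c k) (f k) a) = (\<lambda>_. 0)"
proof -
  define K where "K = {k. k \<le> R \<and> mnonzero m (c k)}"
  have K: "finite K" "K \<noteq> {}"
    using assms(2) by (auto simp: K_def intro: finite_subset[of _ "{..R}"])
  define r where "r = Max K"
  have r: "r \<le> R" "mnonzero m (c r)" using Max_in[OF K] by (auto simp: r_def K_def)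
  have "k \<le> r" if "k \<le> R" "mnonzero m (c k)" for k
    using Max_ge[OF K(1), of k] that by (simp add: r_def K_def)
  hence "mmult m (c k) (f k) = (\<lambda>_. 0)" if "k \<in> {..R} - {..r}" for k
    using that by (intro mmult_vanishing_left) (force simp: mnonzero_def)
  hence "(\<Sum>k\<le>R. mmult m (c k) (f k) a) = (\<Sum>k\<le>r. mmult m (c k) (f k) a)" for a
    using r(1) by (intro sum.mono_neutral_right) auto
  hence "(\<lambda>a. \<Sum>k\<le>r. mmult m (c k) (f k) a) = (\<lambda>_. 0)" using rel by (simp add: fun_eq_iff)
  with r show ?thesis by blast
qed

theorem dfinite_euler_ode:
  assumes E: "subfield_C E" and "dfinite m E F"
  shows "\<exists>r c. (\<forall>k\<le>r. mpoly_over m E (c k)) \<and> mnonzero m (c r) \<and>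
           (\<lambda>a. \<Sum>k\<le>r. mmult m (c k) (euler_pow m F k) a) = (\<lambda>_. 0)"
proof -
  obtain B where B: "finite B" and span: "\<And>R. \<exists>D P. mpoly_over m E D \<and> mnonzero m D \<and>
      (\<forall>k\<le>R. \<forall>\<gamma>\<in>B. mpoly_over m E (P k \<gamma>)) \<and>
      (\<forall>k\<le>R. mmult m D (euler_pow m F k) = (\<lambda>a. \<Sum>\<gamma>\<in>B. mmult m (P k \<gamma>) (ms_deriv m \<gamma> F) a))"
    using dfinite_euler_pow_span[OF assms] by blast
  obtain D P where D: "mpoly_over m E D" "mnonzero m D"
    and P: "\<forall>k\<le>card B. \<forall>\<gamma>\<in>B. mpoly_over m E (P k \<gamma>)"
    and rel: "\<forall>k\<le>card B. mmult m D (euler_pow m F k) = (\<lambda>a. \<Sum>\<gamma>\<in>B. mmult m (P k \<gamma>) (ms_deriv m \<gamma> F) a)"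
    using span[of "card B"] by blast
  obtain c where c: "\<forall>k\<in>{..card B}. mpoly_over m E (c k)" "\<exists>k\<in>{..card B}. mnonzero m (c k)"
    and dep: "(\<lambda>a. \<Sum>k\<in>{..card B}. mmult m (c k) (mmult m D (euler_pow m F k)) a) = (\<lambda>_. 0)"
    using mpoly_span_dependent[OF E B, where I = "{..card B}" and p = P and b = "\<lambda>\<gamma>. ms_deriv m \<gamma> F"
        and f = "\<lambda>k. mmult m D (euler_pow m F k)" and m = m] P rel by auto
  define c' where "c' k = mmult m (c k) D" for k
  have "(\<lambda>a. \<Sum>k\<le>card B. mmult m (c' k) (euler_pow m F k) a) = (\<lambda>_. 0)"
    using dep by (simp add: c'_def mmult_assoc atMost_def)
  moreover have "\<exists>k\<le>card B. mnonzero m (c' k)"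
    using c D by (auto simp: c'_def intro: mnonzero_mpoly_mmult)
  ultimately obtain r where "r \<le> card B" "mnonzero m (c' r)"
    "(\<lambda>a. \<Sum>k\<le>r. mmult m (c' k) (euler_pow m F k) a) = (\<lambda>_. 0)"
    using mmult_relation_leading_nonzero by blast
  moreover have "\<forall>k\<le>r. mpoly_over m E (c' k)"
    using c(1) D(1) \<open>r \<le> card B\<close> by (auto simp: c'_def intro: mpoly_over_mmult[OF E])
  ultimately show ?thesis by blast
qed

section \<open>Restriction to the diagonal through a point of the torus\<close>

definition mons_of_degree :: "nat \<Rightarrow> nat \<Rightarrow> (nat \<Rightarrow> nat) set" where
  "mons_of_degree m n = {a\<in>mons m. (\<Sum>i<m. a i) = n}"

definition mon_eval :: "nat \<Rightarrow> (nat \<Rightarrow> complex) \<Rightarrow> (nat \<Rightarrow> nat) \<Rightarrow> complex" where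
  "mon_eval m \<alpha> a = (\<Prod>i<m. \<alpha> i ^ a i)"

definition mons_pairs_of_degree :: "nat \<Rightarrow> nat \<Rightarrow> ((nat \<Rightarrow> nat) \<times> (nat \<Rightarrow> nat)) set" where
  "mons_pairs_of_degree m n = {(b, c). b \<in> mons m \<and> c \<in> mons m \<and> (\<Sum>i<m. b i) + (\<Sum>i<m. c i) = n}"

lemma finite_mons_of_degree [simp]: "finite (mons_of_degree m n)"
proof (rule finite_subset[OF _ finite_bounded_mons[of "\<lambda>_. n" m]])
  have "a i \<le> n" if "a \<in> mons_of_degree m n" for a i
  proof (cases "i < m")
    case True
    hence "a i \<le> (\<Sum>i<m. a i)" by (intro member_le_sum) auto
    thus ?thesis using that by (simp add: mons_of_degree_def)
  qed (use that in \<open>simp add: mons_of_degree_def mons_def\<close>)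
  thus "mons_of_degree m n \<subseteq> {b. (\<forall>i. b i \<le> n) \<and> (\<forall>i\<ge>m. b i = 0)}"
    by (auto simp: mons_of_degree_def mons_def)
qed

lemma diag_coeff_eq: "diag_coeff m f \<alpha> n = (\<Sum>a\<in>mons_of_degree m n. f a * mon_eval m \<alpha> a)"
  by (simp add: diag_coeff_def mons_of_degree_def mon_eval_def)

lemma mon_eval_add: "mon_eval m \<alpha> (\<lambda>i. b i + c i) = mon_eval m \<alpha> b * mon_eval m \<alpha> c"
  by (simp add: mon_eval_def power_add prod.distrib)

lemma diag_coeff_mmult:
  "diag_coeff m (mmult m P f) \<alpha> n
     = (\<Sum>(b, c)\<in>mons_pairs_of_degree m n. P b * f c * (mon_eval m \<alpha> b * mon_eval m \<alpha> c))"
proof -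
  have "diag_coeff m (mmult m P f) \<alpha> n
      = (\<Sum>a\<in>mons_of_degree m n. \<Sum>b\<in>lower_mons m a. P b * f (\<lambda>i. a i - b i) * mon_eval m \<alpha> a)"
    unfolding diag_coeff_eq
    by (intro sum.cong refl) (simp add: mons_of_degree_def mmult_apply sum_distrib_right)
  also have "\<dots> = (\<Sum>(a, b)\<in>Sigma (mons_of_degree m n) (lower_mons m). P b * f (\<lambda>i. a i - b i) * mon_eval m \<alpha> a)"
    by (rule sum.Sigma) auto
  also have "\<dots> = (\<Sum>(b, c)\<in>mons_pairs_of_degree m n. P b * f c * (mon_eval m \<alpha> b * mon_eval m \<alpha> c))"
  proof (rule sum.reindex_bij_witness[of _ "\<lambda>(b, c). (\<lambda>i. b i + c i, b)" "\<lambda>(a, b). (b, \<lambda>i. a i - b i)"])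
    fix x assume x: "x \<in> Sigma (mons_of_degree m n) (lower_mons m)"
    obtain a b where [simp]: "x = (a, b)" by (cases x)
    have ab: "(\<lambda>i. b i + (a i - b i)) = a" using x by (auto simp: lower_mons_def)
    hence "(\<Sum>i<m. b i) + (\<Sum>i<m. a i - b i) = (\<Sum>i<m. a i)" by (metis sum.distrib)
    with x show "(case x of (a, b) \<Rightarrow> (b, \<lambda>i. a i - b i)) \<in> mons_pairs_of_degree m n"
      by (auto simp: mons_pairs_of_degree_def mons_of_degree_def lower_mons_def)
    show "(case case x of (a, b) \<Rightarrow> (b, \<lambda>i. a i - b i) of (b, c) \<Rightarrow> (\<lambda>i. b i + c i, b)) = x"
      using ab by simp
    show "(case case x of (a, b) \<Rightarrow> (b, \<lambda>i. a i - b i) of (b, c) \<Rightarrow> P b * f c * (mon_eval m \<alpha> b * mon_eval m \<alpha> c)) =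
        (case x of (a, b) \<Rightarrow> P b * f (\<lambda>i. a i - b i) * mon_eval m \<alpha> a)"
      using mon_eval_add[of m \<alpha> b "\<lambda>i. a i - b i"] ab by simp
  next
    fix y assume y: "y \<in> mons_pairs_of_degree m n"
    obtain b c where [simp]: "y = (b, c)" by (cases y)
    show "(case case y of (b, c) \<Rightarrow> (\<lambda>i. b i + c i, b) of (a, b) \<Rightarrow> (b, \<lambda>i. a i - b i)) = y" by auto
    from y show "(case y of (b, c) \<Rightarrow> (\<lambda>i. b i + c i, b)) \<in> Sigma (mons_of_degree m n) (lower_mons m)"
      by (auto simp: mons_pairs_of_degree_def mons_of_degree_def lower_mons_def mons_def sum.distrib)
  qed
  finally show ?thesis .
qed

lemma diag_fps_mult_nth:
  "fps_nth (diag_fps m P \<alpha> * diag_fps m f \<alpha>) n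
     = (\<Sum>(b, c)\<in>mons_pairs_of_degree m n. P b * f c * (mon_eval m \<alpha> b * mon_eval m \<alpha> c))"
proof -
  let ?T = "mons_of_degree m" and ?t = "\<lambda>(b, c). P b * f c * (mon_eval m \<alpha> b * mon_eval m \<alpha> c)"
  have "fps_nth (diag_fps m P \<alpha> * diag_fps m f \<alpha>) n = (\<Sum>j=0..n. \<Sum>bc\<in>?T j \<times> ?T (n - j). ?t bc)"
    unfolding fps_mult_nth diag_fps_def fps_nth_Abs_fps diag_coeff_eq
    by (intro sum.cong refl) (simp add: sum_product sum.cartesian_product algebra_simps)
  also have "\<dots> = (\<Sum>(j, bc)\<in>Sigma {0..n} (\<lambda>j. ?T j \<times> ?T (n - j)). ?t bc)"
    by (rule sum.Sigma) auto
  also have "\<dots> = (\<Sum>bc\<in>mons_pairs_of_degree m n. ?t bc)"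
    by (rule sum.reindex_bij_witness[of _ "\<lambda>bc. (\<Sum>i<m. fst bc i, bc)" snd])
       (auto simp: mons_of_degree_def mons_pairs_of_degree_def)
  finally show ?thesis .
qed

lemma diag_fps_mmult: "diag_fps m (mmult m P f) \<alpha> = diag_fps m P \<alpha> * diag_fps m f \<alpha>"
  by (rule fps_ext) (simp only: diag_fps_mult_nth, simp add: diag_fps_def diag_coeff_mmult)

lemma diag_fps_sum: "diag_fps m (\<lambda>a. \<Sum>k\<in>K. f k a) \<alpha> = (\<Sum>k\<in>K. diag_fps m (f k) \<alpha>)"
  by (rule fps_ext) (simp add: diag_fps_def diag_coeff_def fps_sum_nth sum_distrib_right sum.swap[of _ K])

lemma diag_fps_zero: "diag_fps m (\<lambda>_. 0) \<alpha> = 0"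
  by (rule fps_ext) (simp add: diag_fps_def diag_coeff_def)

lemma fps_euler_nth: "fps_nth (fps_euler h) n = of_nat n * fps_nth h n"
  by (cases n) (simp_all add: fps_euler_def)

lemma fps_euler_iterate_nth: "fps_nth ((fps_euler ^^ k) g) n = of_nat n ^ k * fps_nth g n"
  by (induction k) (simp_all add: fps_euler_nth)

lemma diag_fps_euler_pow: "diag_fps m (euler_pow m F k) \<alpha> = (fps_euler ^^ k) (diag_fps m F \<alpha>)"
  by (rule fps_ext)
     (simp add: fps_euler_iterate_nth diag_fps_def diag_coeff_eq euler_pow_def mons_of_degree_def
       sum_distrib_left mult.assoc del: of_nat_sum)

lemma diag_fps_mone: "diag_fps m mone \<alpha> = 1"
proof (rule fps_ext)
  fix n
  have "diag_coeff m mone \<alpha> n = (\<Sum>a\<in>mons_of_degree m n. if a = (\<lambda>_. 0) then 1 else 0)"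
    unfolding diag_coeff_eq by (intro sum.cong refl) (simp add: mmonom_def mon_eval_def)
  also have "\<dots> = (if n = 0 then 1 else 0)"
  proof -
    have "(\<lambda>_. 0) \<in> mons_of_degree m n \<longleftrightarrow> n = 0" by (auto simp: mons_of_degree_def mons_def)
    thus ?thesis by (simp add: sum.delta)
  qed
  finally show "fps_nth (diag_fps m mone \<alpha>) n = fps_nth 1 n" by (simp add: diag_fps_def)
qed

primrec mpow :: "nat \<Rightarrow> ((nat \<Rightarrow> nat) \<Rightarrow> complex) \<Rightarrow> nat \<Rightarrow> (nat \<Rightarrow> nat) \<Rightarrow> complex" where
  "mpow m P 0 = mone"
| "mpow m P (Suc k) = mmult m P (mpow m P k)"

lemma diag_fps_mpow: "diag_fps m (mpow m P k) \<alpha> = diag_fps m P \<alpha> ^ k"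
  by (induction k) (simp_all add: diag_fps_mone diag_fps_mmult)

lemma mpoly_over_mpow: "subfield_C E \<Longrightarrow> mpoly_over m E P \<Longrightarrow> mpoly_over m E (mpow m P k)"
  by (induction k) (simp_all add: mpoly_over_mmonom mpoly_over_mmult)

lemma mnonzero_mpow:
  "subfield_C E \<Longrightarrow> mpoly_over m E P \<Longrightarrow> mnonzero m P \<Longrightarrow> mnonzero m (mpow m P k)"
  by (induction k) (simp_all add: mnonzero_mone mnonzero_mpoly_mmult mpoly_over_mpow)

lemma diag_fps_mpoly:
  assumes "finite {a\<in>mons m. P a \<noteq> 0}"
  shows "\<exists>q. diag_fps m P \<alpha> = fps_of_poly q"
proof -
  define N where "N = Max (insert 0 ((\<lambda>a. \<Sum>i<m. a i) ` {a\<in>mons m. P a \<noteq> 0}))"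
  have "diag_coeff m P \<alpha> n = 0" if "n > N" for n
  proof -
    have "P a = 0" if "a \<in> mons_of_degree m n" for a
      using that \<open>n > N\<close> assms Max_ge[of "insert 0 ((\<lambda>a. \<Sum>i<m. a i) ` {a\<in>mons m. P a \<noteq> 0})"]
      by (force simp: mons_of_degree_def N_def)
    thus ?thesis unfolding diag_coeff_eq by simp
  qed
  hence "diag_fps m P \<alpha> = fps_of_poly (Poly (map (diag_coeff m P \<alpha>) [0..<Suc N]))"
    by (intro fps_ext) (auto simp: diag_fps_def nth_default_def not_le simp del: upt_Suc)
  thus ?thesis by blast
qed

text \<open>\<open>homogenize m P\<close> is \<open>P(x\<^sub>1 t, \<dots>, x\<^sub>m t)\<close>, with the variable of index \<open>m\<close> playing the role of \<open>t\<close>.\<close>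
definition homogenize :: "nat \<Rightarrow> ((nat \<Rightarrow> nat) \<Rightarrow> complex) \<Rightarrow> (nat \<Rightarrow> nat) \<Rightarrow> complex" where
  "homogenize m P = (\<lambda>a. if a \<in> mons (Suc m) \<and> a m = (\<Sum>i<m. a i) then P (a(m := 0)) else 0)"

lemma homogenize_at_degree:
  assumes "b \<in> mons m"
  shows "b(m := \<Sum>i<m. b i) \<in> mons (Suc m)" and "homogenize m P (b(m := \<Sum>i<m. b i)) = P b"
proof -
  have "b m = 0" using assms by (simp add: mons_def)
  hence "b(m := 0) = b" by auto
  moreover have "(\<Sum>i<m. (b(m := k)) i) = (\<Sum>i<m. b i)" for k by simp
  ultimately show "b(m := \<Sum>i<m. b i) \<in> mons (Suc m)" "homogenize m P (b(m := \<Sum>i<m. b i)) = P b"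
    using assms by (auto simp: homogenize_def mons_def)
qed

lemma homogenize_nonzero:
  assumes "homogenize m P a \<noteq> 0"
  shows "a \<in> mons (Suc m)" "a(m := 0) \<in> mons m" "a m = (\<Sum>i<m. a i)" "P (a(m := 0)) \<noteq> 0"
  using assms by (auto simp: homogenize_def mons_def split: if_splits)

lemma sum_lessThan_fun_upd:
  fixes f :: "nat \<Rightarrow> nat"
  shows "(\<Sum>i<m. (f(m := k)) i) = (\<Sum>i<m. f i)"
  by (rule sum.cong) auto

lemma mon_eval_fun_upd: "mon_eval m \<alpha> (f(m := k)) = mon_eval m \<alpha> f"
  unfolding mon_eval_def by (rule prod.cong) auto

lemma spec_fps_homogenize: "spec_fps m (homogenize m P) \<alpha> = diag_fps m P \<alpha>"
proof (rule fps_ext)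
  fix k
  let ?A = "{a\<in>mons (Suc m). homogenize m P a \<noteq> 0 \<and> a m = k}"
  have "fps_nth (spec_fps m (homogenize m P) \<alpha>) k = (\<Sum>a\<in>?A. homogenize m P a * mon_eval m \<alpha> a)"
    by (simp add: spec_fps_def mon_eval_def)
  also have "\<dots> = (\<Sum>b\<in>{b\<in>mons_of_degree m k. P b \<noteq> 0}. P b * mon_eval m \<alpha> b)"
  proof (rule sum.reindex_bij_witness[of _ "\<lambda>b. b(m := \<Sum>i<m. b i)" "\<lambda>a. a(m := 0)"])
    fix a assume "a \<in> ?A"
    hence a: "a(m := 0) \<in> mons m" "a m = (\<Sum>i<m. a i)" "P (a(m := 0)) \<noteq> 0" "a m = k"
      using homogenize_nonzero[of m P a] by auto
    show "(a(m := 0))(m := \<Sum>i<m. (a(m := 0)) i) = a" by (simp add: sum_lessThan_fun_upd a(2)[symmetric])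
    show "a(m := 0) \<in> {b\<in>mons_of_degree m k. P b \<noteq> 0}" using a by (simp add: mons_of_degree_def sum_lessThan_fun_upd)
    show "P (a(m := 0)) * mon_eval m \<alpha> (a(m := 0)) = homogenize m P a * mon_eval m \<alpha> a"
      using \<open>a \<in> ?A\<close> a(2) by (simp add: homogenize_def mon_eval_fun_upd)
  next
    fix b assume b: "b \<in> {b\<in>mons_of_degree m k. P b \<noteq> 0}"
    hence "b m = 0" by (simp add: mons_of_degree_def mons_def)
    thus "(b(m := \<Sum>i<m. b i))(m := 0) = b" by auto
    show "b(m := \<Sum>i<m. b i) \<in> ?A"
      using b homogenize_at_degree[of b m] by (auto simp: mons_of_degree_def)
  qed
  also have "\<dots> = fps_nth (diag_fps m P \<alpha>) k"
    unfolding diag_fps_def fps_nth_Abs_fps diag_coeff_eq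
    by (rule sum.mono_neutral_left) (use finite_mons_of_degree[of m k] in \<open>auto simp: mons_of_degree_def\<close>)
  finally show "fps_nth (spec_fps m (homogenize m P) \<alpha>) k = fps_nth (diag_fps m P \<alpha>) k" .
qed

lemma mpoly_over_homogenize:
  assumes E: "subfield_C E" and P: "mpoly_over m E P"
  shows "mpoly_over (Suc m) E (homogenize m P)"
proof -
  have "{a\<in>mons (Suc m). homogenize m P a \<noteq> 0} \<subseteq> (\<lambda>b. b(m := \<Sum>i<m. b i)) ` {b\<in>mons m. P b \<noteq> 0}"
  proof
    fix a assume "a \<in> {a\<in>mons (Suc m). homogenize m P a \<noteq> 0}"
    hence a: "a(m := 0) \<in> mons m" "a m = (\<Sum>i<m. a i)" "P (a(m := 0)) \<noteq> 0"
      using homogenize_nonzero[of m P a] by auto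
    have "a = (a(m := 0))(m := \<Sum>i<m. (a(m := 0)) i)" by (simp add: sum_lessThan_fun_upd a(2)[symmetric])
    with a show "a \<in> (\<lambda>b. b(m := \<Sum>i<m. b i)) ` {b\<in>mons m. P b \<noteq> 0}" by blast
  qed
  hence "finite {a\<in>mons (Suc m). homogenize m P a \<noteq> 0}"
    by (rule finite_subset) (use P in \<open>simp add: mpoly_over_def\<close>)
  moreover have "homogenize m P a \<in> E" for a
  proof (cases "homogenize m P a = 0")
    case False
    hence "homogenize m P a = P (a(m := 0))" "a(m := 0) \<in> mons m"
      using homogenize_nonzero(2)[of m P a] unfolding homogenize_def by (simp_all split: if_split_asm)
    thus ?thesis using P by (simp add: mpoly_over_def)
  qed (simp add: subfield_C_zero[OF E])
  ultimately show ?thesis by (simp add: mpoly_over_def)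
qed

lemma mnonzero_homogenize:
  assumes "mnonzero m P" shows "\<exists>a\<in>mons (Suc m). homogenize m P a \<noteq> 0"
proof -
  obtain b where "b \<in> mons m" "P b \<noteq> 0" using assms by (auto simp: mnonzero_def)
  moreover note homogenize_at_degree[OF \<open>b \<in> mons m\<close>]
  ultimately show ?thesis by (metis (no_types))
qed

lemma diag_euler_ode_conv_radius_gt_1:
  assumes c: "\<forall>k\<le>r. mpoly_over m E (c k)"
    and ode: "(\<lambda>a. \<Sum>k\<le>r. mmult m (c k) (euler_pow m F k) a) = (\<lambda>_. 0)"
    and bd: "\<forall>n\<ge>1. norm (diag_coeff m F \<alpha> n) \<le> C * real n powr C'" and C: "C \<ge> 0"
    and K: "C' \<le> real K" and rat: "is_rational_fps (diag_fps m F \<alpha>)"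
  shows "conv_radius (fps_nth (diag_fps m (c r) \<alpha> ^ Suc K * diag_fps m F \<alpha>)) > 1"
proof -
  have "\<forall>k\<in>{..r}. \<exists>q. diag_fps m (c k) \<alpha> = fps_of_poly q"
    using c by (intro ballI diag_fps_mpoly) (auto simp: mpoly_over_def)
  then obtain Q where Q: "\<And>k. k \<in> {..r} \<Longrightarrow> diag_fps m (c k) \<alpha> = fps_of_poly (Q k)"
    by metis
  have "0 = diag_fps m (\<lambda>a. \<Sum>k\<le>r. mmult m (c k) (euler_pow m F k) a) \<alpha>"
    unfolding ode by (simp add: diag_fps_zero)
  also have "\<dots> = (\<Sum>k\<le>r. fps_of_poly (Q k) * (fps_euler ^^ k) (diag_fps m F \<alpha>))"
    unfolding diag_fps_sum by (intro sum.cong refl) (simp add: diag_fps_mmult Q diag_fps_euler_pow)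
  finally have "(\<Sum>k\<le>r. fps_of_poly (Q k) * (fps_euler ^^ k) (diag_fps m F \<alpha>)) = 0" ..
  moreover obtain p q where "q \<noteq> 0" "fps_of_poly q * diag_fps m F \<alpha> = fps_of_poly p"
    using rat unfolding is_rational_fps_def by blast
  moreover have "\<forall>n\<ge>1. norm (diag_fps m F \<alpha> $ n) \<le> C * real n powr C'"
    using bd by (simp add: diag_fps_def)
  ultimately show ?thesis
    using euler_ode_rational_conv_radius_gt_1[OF _ C K] Q[of r] by auto
qed

theorem lemma3p4:
  fixes m :: nat and E :: "complex set" and F :: "(nat \<Rightarrow> nat) \<Rightarrow> complex"
    and C1 C2 :: real
  assumes "subfield_C E"
    and "mseries_over m E F"
    and "dfinite m E F"
    and "C1 > 0" and "C2 > 0"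
    and "\<forall>\<alpha>. on_torus m \<alpha> \<longrightarrow> (\<forall>n\<ge>1. norm (diag_coeff m F \<alpha> n) \<le> C1 * real n powr C2)"
  shows "\<exists>W. mpoly_over (Suc m) E W \<and> (\<exists>a\<in>mons (Suc m). W a \<noteq> 0) \<and>
           (\<forall>\<alpha>. on_torus m \<alpha> \<and> is_rational_fps (diag_fps m F \<alpha>) \<longrightarrow>
              conv_radius (fps_nth (spec_fps m W \<alpha> * diag_fps m F \<alpha>)) > 1)"
proof -
  obtain r c where c: "\<forall>k\<le>r. mpoly_over m E (c k)" and cr: "mnonzero m (c r)"
    and ode: "(\<lambda>a. \<Sum>k\<le>r. mmult m (c k) (euler_pow m F k) a) = (\<lambda>_. 0)"
    using dfinite_euler_ode[OF assms(1,3)] by blast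
  define K where "K = nat \<lceil>C2\<rceil>"
  have K: "C2 \<le> real K" unfolding K_def by linarith
  define W where "W = homogenize m (mpow m (c r) (Suc K))"
  have "mpoly_over (Suc m) E W"
    unfolding W_def by (intro mpoly_over_homogenize[OF assms(1)] mpoly_over_mpow[OF assms(1)]) (use c in simp)
  moreover have "\<exists>a\<in>mons (Suc m). W a \<noteq> 0"
    unfolding W_def by (intro mnonzero_homogenize mnonzero_mpow[OF assms(1)] cr) (use c in simp)
  moreover have "conv_radius (fps_nth (spec_fps m W \<alpha> * diag_fps m F \<alpha>)) > 1"
    if "on_torus m \<alpha>" "is_rational_fps (diag_fps m F \<alpha>)" for \<alpha>
  proof -
    have "\<forall>n\<ge>1. norm (diag_coeff m F \<alpha> n) \<le> C1 * real n powr C2" using assms(6) that(1) by blast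
    hence "conv_radius (fps_nth (diag_fps m (c r) \<alpha> ^ Suc K * diag_fps m F \<alpha>)) > 1"
      by (rule diag_euler_ode_conv_radius_gt_1[OF c ode _ _ K that(2)]) (use assms(4) in simp)
    thus ?thesis unfolding W_def spec_fps_homogenize diag_fps_mpow .
  qed
  ultimately show ?thesis by blast
qed

end
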